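(* Let $n \ge 4$, $1 \le k < \ell \le n-2$, and let $\alpha$ be the composition of length $n-1$ with entry $2$ in positions $1$, $k+1$ and $\ell+1$ and entry $1$ in all other positions. Then for every prime $p$, \begin{align*} g_\alpha(p) &= p^{3n -k-\ell-9} + (n-\ell-1) (p-1) (p+1)p^{2n -k-7} +(n-k-1)(p-1) p^{2n-\ell-6} - (n-\ell-1)p^{n-4}(p-1) \\ &\quad +(n-k-2)(n-\ell-1) (p-1)^2p^{n-4} + \left((n-\ell-2) + \binom{n-\ell-2}{2}\right)(p-1)(p-2)(p-3)p^{n-4}. \end{align*}
   Context: For a composition $\alpha=(e_1,\ldots,e_{n-1})$ (positive integers), $g_\alpha(p)$ is the number of $n\times n$ irreducible subring matrices with diagonal $(p^{e_1},\ldots,p^{e_{n-1}},1)$: upper triangular integer matrices $A$ with $A_{rr}=p^{e_r}$ ($r<n$), $A_{nn}=1$, last column $(1,\ldots,1)^T$, entries $A_{rs}=p\,a_{rs}$ for $1\le r<s\le n-1$ with integers $0\le p\,a_{rs}<p^{e_r}$, such that for all columns $v_i,v_j$ of $A$ the componentwise product $v_i\circ v_j$ lies in the $\mathbb{Z}$-column span of $A$. Binomial coefficients $\binom{m}{2}$ with $m<2$ are $0$. *)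

theory Defs
  imports Main "HOL-Computational_Algebra.Primes"
begin

text \<open>Matrices are indexed 0-based by {0..<n}, represented as functions
  nat \<Rightarrow> nat \<Rightarrow> int which vanish outside the n\<times>n block.
  A composition (e_1,...,e_{n-1}) is a list e of length n-1 (0-based: e!r = e_{r+1}).\<close>

definition irreducible_subring_matrices :: "nat \<Rightarrow> nat list \<Rightarrow> (nat \<Rightarrow> nat \<Rightarrow> int) set" where
  "irreducible_subring_matrices p e =
    (let n = length e + 1 in
     {A. (\<forall>r s. (n \<le> r \<or> n \<le> s) \<longrightarrow> A r s = 0)
       \<and> (\<forall>r<n. \<forall>s<r. A r s = 0)
       \<and> (\<forall>r<n - 1. A r r = int p ^ (e ! r))
       \<and> A (n - 1) (n - 1) = 1
       \<and> (\<forall>r<n. A r (n - 1) = 1)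
       \<and> (\<forall>r s. r < s \<and> s < n - 1 \<longrightarrow>
             (\<exists>a::int. A r s = int p * a) \<and> 0 \<le> A r s \<and> A r s < int p ^ (e ! r))
       \<and> (\<forall>i<n. \<forall>j<n. \<exists>c :: nat \<Rightarrow> int.
             \<forall>r<n. A r i * A r j = (\<Sum>t<n. c t * A r t)) })"

definition g_count :: "nat list \<Rightarrow> nat \<Rightarrow> nat" where
  "g_count e p = card (irreducible_subring_matrices p e)"

definition alpha_comp :: "nat \<Rightarrow> nat \<Rightarrow> nat \<Rightarrow> nat list" where
  "alpha_comp n k l = map (\<lambda>i. if i = 0 \<or> i = k \<or> i = l then 2 else 1) [0..<n - 1]"

end

theory Submission
  imports Defs
begin

text \<open>The matrices in question have rows \<open>0\<close>, \<open>k\<close>, \<open>l\<close> equal to \<open>p\<close> times digit vectors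
  \<open>x\<close>, \<open>y\<close>, \<open>z\<close> (digits in \<open>[0, p)\<close>), all other rows being \<open>p e\<^sub>r\<close> apart from the last
  column of ones. Solving the triangular system by back-substitution (rows \<open>l\<close>, \<open>k\<close>, \<open>0\<close>
  in turn) turns membership of a product of two columns in the column span into congruences
  mod \<open>p\<close>, and the closure condition becomes: either \<open>y\<^sub>l \<noteq> 0\<close>, \<open>x\<^sub>k = 0\<close> and \<open>z\<close> is zero
  or a unit vector; or \<open>y\<^sub>l = 0\<close> and \<open>g (y y\<^sup>T - diag y) + d (z z\<^sup>T - diag z) \<equiv> 0\<close> on the
  positions after \<open>k\<close>, with weights \<open>(g, d) = (x\<^sub>k, x\<^sub>l)\<close>. The other \<open>n - 4\<close> digits of \<open>x\<close>
  are free. For weights prime to \<open>p\<close>, two positions where \<open>(y, z)\<close> is linearly independent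
  mod \<open>p\<close> carry complementary idempotent entries, so the solutions are pairs of zero or unit
  vectors, the diagonal \<open>y = z\<close> (when \<open>g + d \<equiv> 0\<close>), or vectors supported on one or two
  positions. Counting each family together with its admissible weights gives the formula.\<close>

definition digit_vecs :: "int \<Rightarrow> nat set \<Rightarrow> (nat \<Rightarrow> int) set" where
  "digit_vecs P D = {f. (\<forall>i\<in>D. 0 \<le> f i \<and> f i < P) \<and> (\<forall>i. i \<notin> D \<longrightarrow> f i = 0)}"

lemma digit_vecs_range: "f \<in> digit_vecs P D \<Longrightarrow> i \<in> D \<Longrightarrow> 0 \<le> f i \<and> f i < P"
  unfolding digit_vecs_def by auto

lemma digit_vecs_outside: "f \<in> digit_vecs P D \<Longrightarrow> i \<notin> D \<Longrightarrow> f i = 0"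
  unfolding digit_vecs_def by auto

lemma digit_vecs_mono: "f \<in> digit_vecs P D \<Longrightarrow> D \<subseteq> E \<Longrightarrow> 0 < P \<Longrightarrow> f \<in> digit_vecs P E"
  unfolding digit_vecs_def by auto

lemma digit_vecs_empty: "digit_vecs P {} = {\<lambda>_. 0}"
  unfolding digit_vecs_def by auto

lemma digit_vecs_insert:
  assumes "a \<notin> D"
  shows "digit_vecs P (insert a D) = (\<lambda>(v, f). f(a := v)) ` ({0..<P} \<times> digit_vecs P D)"
proof (rule set_eqI, rule iffI)
  fix f assume f: "f \<in> digit_vecs P (insert a D)"
  have "f(a := 0) \<in> digit_vecs P D" "f a \<in> {0..<P}"
    using f assms unfolding digit_vecs_def by auto
  then show "f \<in> (\<lambda>(v, f). f(a := v)) ` ({0..<P} \<times> digit_vecs P D)"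
    by (intro image_eqI[where x = "(f a, f(a := 0))"]) auto
qed (auto simp: digit_vecs_def)

lemma inj_on_digit_vecs_insert:
  assumes "a \<notin> D"
  shows "inj_on (\<lambda>(v, f). f(a := v)) ({0..<P} \<times> digit_vecs P D)"
proof (rule inj_onI, clarify)
  fix v f v' f'
  assume f: "f \<in> digit_vecs P D" and f': "f' \<in> digit_vecs P D" and eq: "f(a := v) = f'(a := v')"
  show "v = v' \<and> f = f'"
  proof
    show "v = v'" using fun_cong[OF eq, of a] by simp
    show "f = f'"
    proof
      fix t show "f t = f' t"
        using fun_cong[OF eq, of t] digit_vecs_outside[OF f] digit_vecs_outside[OF f'] assms
        by (cases "t = a") auto
    qed
  qed
qed

lemma finite_card_digit_vecs:
  assumes "finite D" "0 \<le> P"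
  shows "finite (digit_vecs P D) \<and> card (digit_vecs P D) = nat P ^ card D"
  using assms(1)
proof (induction D rule: finite_induct)
  case empty show ?case by (simp add: digit_vecs_empty)
next
  case (insert a D)
  have "card (digit_vecs P (insert a D)) = card ({0..<P} \<times> digit_vecs P D)"
    unfolding digit_vecs_insert[OF insert(2)]
    by (rule card_image[OF inj_on_digit_vecs_insert[OF insert(2)]])
  then show ?case
    using insert assms(2) by (simp add: digit_vecs_insert card_cartesian_product)
qed

lemma finite_digit_vecs: "finite D \<Longrightarrow> 0 \<le> P \<Longrightarrow> finite (digit_vecs P D)"
  using finite_card_digit_vecs by blast

lemma card_digit_vecs: "finite D \<Longrightarrow> 0 \<le> P \<Longrightarrow> card (digit_vecs P D) = nat P ^ card D"
  using finite_card_digit_vecs by blast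

definition single_vec :: "nat \<Rightarrow> int \<Rightarrow> nat \<Rightarrow> int" where
  "single_vec i a = (\<lambda>t. if t = i then a else 0)"

definition double_vec :: "nat \<Rightarrow> int \<Rightarrow> nat \<Rightarrow> int \<Rightarrow> nat \<Rightarrow> int" where
  "double_vec i a j b = (\<lambda>t. if t = i then a else if t = j then b else 0)"

lemma single_vec_0: "single_vec i 0 = (\<lambda>_. 0)"
  unfolding single_vec_def by auto

definition zero_or_basis :: "nat set \<Rightarrow> (nat \<Rightarrow> int) set" where
  "zero_or_basis D = insert (\<lambda>_. 0) ((\<lambda>i. single_vec i 1) ` D)"

lemma zero_or_basis_values: "f \<in> zero_or_basis D \<Longrightarrow> f i = 0 \<or> f i = 1"
  unfolding zero_or_basis_def single_vec_def by auto

lemma zero_or_basis_idem: "f \<in> zero_or_basis D \<Longrightarrow> f i * f j - (if i = j then f i else 0) = 0"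
  unfolding zero_or_basis_def single_vec_def by auto

lemma zero_or_basis_mono: "U \<subseteq> S \<Longrightarrow> zero_or_basis U \<subseteq> zero_or_basis S"
  unfolding zero_or_basis_def by auto

lemma zero_or_basis_subset_digit_vecs: "2 \<le> P \<Longrightarrow> zero_or_basis D \<subseteq> digit_vecs P D"
  unfolding zero_or_basis_def digit_vecs_def single_vec_def by auto

lemma finite_zero_or_basis: "finite D \<Longrightarrow> finite (zero_or_basis D)"
  unfolding zero_or_basis_def by simp

lemma card_zero_or_basis: "finite D \<Longrightarrow> card (zero_or_basis D) = card D + 1"
proof -
  assume "finite D"
  moreover have "inj_on (\<lambda>i. single_vec i 1) D"
    by (rule inj_onI) (metis single_vec_def zero_neq_one)
  moreover have "(\<lambda>_. 0) \<notin> (\<lambda>i. single_vec i 1) ` D"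
    by (metis (mono_tags) image_iff single_vec_def zero_neq_one)
  ultimately show ?thesis
    unfolding zero_or_basis_def by (simp add: card_image)
qed

lemma card_ordered_pairs:
  assumes "finite U"
  shows "card {(i, j). i \<in> U \<and> j \<in> U \<and> (i::nat) < j} = card U choose 2"
proof -
  let ?A = "{(i, j). i \<in> U \<and> j \<in> U \<and> (i::nat) < j}"
  have "inj_on (\<lambda>(i, j). {i, j}) ?A"
  proof (rule inj_onI, clarsimp)
    fix i j i' j' :: nat
    assume "i < j" "i' < j'" "{i, j} = {i', j'}"
    then show "i = i' \<and> j = j'" by (metis doubleton_eq_iff not_less_iff_gr_or_eq)
  qed
  moreover have "(\<lambda>(i, j). {i, j}) ` ?A = {B. B \<subseteq> U \<and> card B = 2}"
  proof (rule set_eqI, rule iffI)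
    fix B assume "B \<in> {B. B \<subseteq> U \<and> card B = 2}"
    then obtain i j where B: "B = {i, j}" "i \<noteq> j" "B \<subseteq> U"
      unfolding card_2_iff by auto
    show "B \<in> (\<lambda>(i, j). {i, j}) ` ?A"
    proof (cases "i < j")
      case True then show ?thesis using B by (intro image_eqI[where x = "(i, j)"]) auto
    next
      case False then show ?thesis using B by (intro image_eqI[where x = "(j, i)"]) auto
    qed
  qed auto
  ultimately have "card ?A = card {B. B \<subseteq> U \<and> card B = 2}"
    using card_image by fastforce
  then show ?thesis using n_subsets[OF assms] by simp
qed

lemma dvd_linear_combination: "p dvd a \<Longrightarrow> p dvd b \<Longrightarrow> x = c * a + d * b \<Longrightarrow> p dvd (x :: int)"
  by simp

section \<open>Weighted idempotent pairs\<close>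

definition idem_pair :: "int \<Rightarrow> int \<Rightarrow> int \<Rightarrow> nat set \<Rightarrow> (nat \<Rightarrow> int) \<Rightarrow> (nat \<Rightarrow> int) \<Rightarrow> bool" where
  "idem_pair P g d S y z \<longleftrightarrow> (\<forall>i\<in>S. \<forall>j\<in>S.
     P dvd g * (y i * y j - (if i = j then y i else 0)) + d * (z i * z j - (if i = j then z i else 0)))"

lemma idem_pair_cong:
  "(\<And>i. i \<in> S \<Longrightarrow> y i = y' i) \<Longrightarrow> idem_pair P g d S y z = idem_pair P g d S y' z"
  unfolding idem_pair_def by simp

lemma zero_or_basis_idem_pair:
  "y \<in> zero_or_basis D \<Longrightarrow> z \<in> zero_or_basis E \<Longrightarrow> idem_pair P g d S y z"
  unfolding idem_pair_def using zero_or_basis_idem[of y] zero_or_basis_idem[of z] by auto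

locale prime_modulus =
  fixes P :: int
  assumes prime_P: "prime P"
begin

lemma P_ge_2: "P \<ge> 2"
  using prime_P prime_ge_2_int by blast

lemma P_nonzero: "P \<noteq> 0"
  using P_ge_2 by simp

lemma P_dvd_mult_iff: "P dvd a * b \<longleftrightarrow> P dvd a \<or> P dvd b"
  using prime_P prime_dvd_mult_iff by blast

lemma digit_dvd_eq_0: "0 \<le> a \<Longrightarrow> a < P \<Longrightarrow> P dvd a \<Longrightarrow> a = 0"
  using zdvd_not_zless[of a P] by (cases "a = 0") auto

lemma digits_cong_eq:
  assumes "0 \<le> a" "a < P" "0 \<le> b" "b < P" "P dvd a - b"
  shows "a = b"
proof (cases "b \<le> a")
  case True then show ?thesis using digit_dvd_eq_0[of "a - b"] assms by auto
next
  case False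
  have "P dvd b - a" using assms(5) by (metis dvd_minus_iff minus_diff_eq)
  then show ?thesis using digit_dvd_eq_0[of "b - a"] assms False by auto
qed

lemma idempotent_digit:
  assumes "0 \<le> a" "a < P" "P dvd a * a - a"
  shows "a = 0 \<or> a = 1"
proof -
  have "P dvd a * (a - 1)" using assms(3) by (simp add: algebra_simps)
  then have "P dvd a \<or> P dvd a - 1" using P_dvd_mult_iff by blast
  then show ?thesis using digits_cong_eq[of a 1] digit_dvd_eq_0[of a] assms P_ge_2 by auto
qed

lemma not_idempotent_digit: "2 \<le> a \<Longrightarrow> a < P \<Longrightarrow> \<not> P dvd a * a - a"
  using idempotent_digit[of a] by auto

text \<open>In the next two lemmas \<open>(y, z)\<close> and \<open>(y', z')\<close> are the entries of a solution of
  \<open>idem_pair\<close> at two distinct positions.\<close>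
lemma independent_entries_complementary:
  fixes g d y z y' z' :: int
  assumes g: "\<not> P dvd g" and d: "\<not> P dvd d"
    and ii: "P dvd g * (y * y - y) + d * (z * z - z)"
    and jj: "P dvd g * (y' * y' - y') + d * (z' * z' - z')"
    and ij: "P dvd g * (y * y') + d * (z * z')"
    and det: "\<not> P dvd y * z' - z * y'"
  shows "P dvd 1 - y - y' \<and> P dvd 1 - z - z'"
proof -
  have a: "P dvd g * y * (1 - y - y') + d * z * (1 - z - z')"
    by (rule dvd_linear_combination[OF ii ij, of _ "-1" "-1"]) (simp add: algebra_simps)
  have b: "P dvd g * y' * (1 - y - y') + d * z' * (1 - z - z')"
    by (rule dvd_linear_combination[OF jj ij, of _ "-1" "-1"]) (simp add: algebra_simps)
  have "P dvd g * (1 - y - y') * (y * z' - z * y')"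
    by (rule dvd_linear_combination[OF a b, of _ "z'" "-z"]) (simp add: algebra_simps)
  moreover have "P dvd d * (1 - z - z') * (y * z' - z * y')"
    by (rule dvd_linear_combination[OF a b, of _ "-y'" "y"]) (simp add: algebra_simps)
  ultimately show ?thesis using g d det P_dvd_mult_iff by blast
qed

lemma dependent_entries_diagonal:
  fixes g d y z y' z' :: int
  assumes g: "\<not> P dvd g" and d: "\<not> P dvd d"
    and ii: "P dvd g * (y * y - y) + d * (z * z - z)"
    and ij: "P dvd g * (y * y') + d * (z * z')"
    and det: "P dvd y * z' - z * y'"
    and nz: "\<not> (P dvd y \<and> P dvd z)" and nz': "\<not> (P dvd y' \<and> P dvd z')"
  shows "P dvd g + d \<and> P dvd y - z"
proof -
  have "P dvd y' * (g * y * y + d * z * z)"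
    by (rule dvd_linear_combination[OF ij det, of _ y "-d * z"]) (simp add: algebra_simps)
  moreover have "P dvd z' * (g * y * y + d * z * z)"
    by (rule dvd_linear_combination[OF ij det, of _ z "g * y"]) (simp add: algebra_simps)
  ultimately have quad: "P dvd g * y * y + d * z * z" using nz' P_dvd_mult_iff by blast
  have lin: "P dvd g * y + d * z"
    by (rule dvd_linear_combination[OF quad ii, of _ 1 "-1"]) (simp add: algebra_simps)
  have "P dvd d * z * (z - y)"
    by (rule dvd_linear_combination[OF quad lin, of _ 1 "-y"]) (simp add: algebra_simps)
  moreover have "\<not> P dvd z"
  proof
    assume "P dvd z"
    then have "P dvd g * y" using lin by (metis dvd_add_left_iff dvd_mult2 mult.commute)
    then show False using g nz \<open>P dvd z\<close> P_dvd_mult_iff by blast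
  qed
  ultimately have zy: "P dvd z - y" using d P_dvd_mult_iff by blast
  have "P dvd (g + d) * y"
    by (rule dvd_linear_combination[OF lin zy, of _ 1 "-d"]) (simp add: algebra_simps)
  moreover have "\<not> P dvd y"
    using zy nz by (metis dvd_diff_commute dvd_add_right_iff diff_add_cancel)
  ultimately show ?thesis
    using zy P_dvd_mult_iff by (metis dvd_minus_iff minus_diff_eq)
qed

lemma complement_digit:
  assumes "0 \<le> a'" "a' < P" "P dvd 1 - a - a'" "2 \<le> a" "a < P"
  shows "a' = P + 1 - a"
proof -
  have "P dvd a' - (P + 1 - a)"
    by (rule dvd_linear_combination[OF assms(3) dvd_refl, of _ "-1" "-1"]) (simp add: algebra_simps)
  then show ?thesis using digits_cong_eq[of a' "P + 1 - a"] assms by auto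
qed

lemma complement_bit:
  assumes "0 \<le> a'" "a' < P" "P dvd 1 - a - a'" "a = 0 \<or> a = 1"
  shows "a' = 1 - a"
proof -
  have "P dvd a' - (1 - a)"
    by (rule dvd_linear_combination[OF assms(3) assms(3), of _ "-1" 0]) (simp add: algebra_simps)
  then show ?thesis using digits_cong_eq[of a' "1 - a"] assms P_ge_2 by auto
qed

lemma zero_or_basis_iff_idem:
  assumes f: "f \<in> digit_vecs P D"
  shows "f \<in> zero_or_basis D \<longleftrightarrow> (\<forall>i\<in>D. \<forall>j\<in>D. P dvd f i * f j - (if i = j then f i else 0))"
proof
  assume h: "\<forall>i\<in>D. \<forall>j\<in>D. P dvd f i * f j - (if i = j then f i else 0)"
  note range = digit_vecs_range[OF f] and outside = digit_vecs_outside[OF f]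
  show "f \<in> zero_or_basis D"
  proof (cases "\<exists>i\<in>D. f i = 1")
    case True
    then obtain i where i: "i \<in> D" "f i = 1" by blast
    have "f t = single_vec i 1 t" for t
    proof (cases "t \<in> D \<and> t \<noteq> i")
      case True
      have "P dvd f i * f t - (if i = t then f i else 0)" using h i(1) True by blast
      then have "P dvd f t" using i(2) True by simp
      then show ?thesis using digit_dvd_eq_0 range[of t] True unfolding single_vec_def by auto
    next
      case False
      then show ?thesis using i(2) outside[of t] unfolding single_vec_def by auto
    qed
    then show ?thesis unfolding zero_or_basis_def using i(1) by auto
  next
    case False
    have "f i = 0" for i
    proof (cases "i \<in> D")
      case True
      have "P dvd f i * f i - (if i = i then f i else 0)" using h True by blast
      then show ?thesis using idempotent_digit[of "f i"] range[OF True] False True by auto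
    qed (rule outside)
    then show ?thesis unfolding zero_or_basis_def by auto
  qed
next
  assume "f \<in> zero_or_basis D"
  then show "\<forall>i\<in>D. \<forall>j\<in>D. P dvd f i * f j - (if i = j then f i else 0)"
    using zero_or_basis_idem[of f D] by simp
qed

end

section \<open>Classification of the solutions\<close>

lemma single_vec_bit_zero_or_basis:
  assumes "f = single_vec i a" "a = 0 \<or> a = 1" "a \<noteq> 0 \<Longrightarrow> i \<in> D"
  shows "f \<in> zero_or_basis D"
  using assms single_vec_0 unfolding zero_or_basis_def by auto

lemma double_vec_bit_zero_or_basis:
  assumes f: "f = double_vec i a j (1 - a)" and a: "a = 0 \<or> a = 1" and "i \<noteq> j"
    and D: "\<And>t. f t \<noteq> 0 \<Longrightarrow> t \<in> D"
  shows "f \<in> zero_or_basis D"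
proof (cases "a = 0")
  case True
  then have "f = single_vec j 1" using f \<open>i \<noteq> j\<close> by (auto simp: double_vec_def single_vec_def fun_eq_iff)
  moreover have "j \<in> D" using D[of j] \<open>f = single_vec j 1\<close> by (simp add: single_vec_def)
  ultimately show ?thesis unfolding zero_or_basis_def by simp
next
  case False
  then have "f = single_vec i 1" using f a \<open>i \<noteq> j\<close> by (auto simp: double_vec_def single_vec_def fun_eq_iff)
  moreover have "i \<in> D" using D[of i] \<open>f = single_vec i 1\<close> by (simp add: single_vec_def)
  ultimately show ?thesis unfolding zero_or_basis_def by simp
qed

context prime_modulus
begin

text \<open>In \<open>single_sols\<close> and
  \<open>double_sols\<close> the pair \<open>(a, b) \<in> generic_pairs\<close> consists of the entries of \<open>y\<close> and \<open>z\<close>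
  at the (first) nonzero position.\<close>
definition generic_pairs :: "(int \<times> int) set" where
  "generic_pairs = {(a, b). 2 \<le> a \<and> a < P \<and> 2 \<le> b \<and> b < P \<and> a \<noteq> b}"

definition basis_sols :: "nat set \<Rightarrow> nat set \<Rightarrow> ((nat \<Rightarrow> int) \<times> (nat \<Rightarrow> int)) set" where
  "basis_sols S U = zero_or_basis S \<times> zero_or_basis U"

definition diag_sols :: "nat set \<Rightarrow> ((nat \<Rightarrow> int) \<times> (nat \<Rightarrow> int)) set" where
  "diag_sols U = (\<lambda>t. (t, t)) ` digit_vecs P U"

definition single_sols :: "nat set \<Rightarrow> ((nat \<Rightarrow> int) \<times> (nat \<Rightarrow> int)) set" where
  "single_sols U = (\<lambda>(i, a, b). (single_vec i a, single_vec i b)) ` (U \<times> generic_pairs)"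

definition double_sols :: "nat set \<Rightarrow> ((nat \<Rightarrow> int) \<times> (nat \<Rightarrow> int)) set" where
  "double_sols U = (\<lambda>((i, j), a, b). (double_vec i a j (P + 1 - a), double_vec i b j (P + 1 - b)))
     ` ({(i, j). i \<in> U \<and> j \<in> U \<and> i < j} \<times> generic_pairs)"

end

locale nondiag_solution = prime_modulus +
  fixes g d :: int and S U :: "nat set" and y z :: "nat \<Rightarrow> int"
  assumes U_subset: "U \<subseteq> S"
    and y: "y \<in> digit_vecs P S" and z: "z \<in> digit_vecs P U"
    and g: "\<not> P dvd g" and d: "\<not> P dvd d"
    and solution: "idem_pair P g d S y z"
    and not_diagonal: "\<not> (P dvd g + d \<and> (\<forall>i\<in>S. y i = z i))"
begin

definition support :: "nat set" where
  "support = {i \<in> S. y i \<noteq> 0 \<or> z i \<noteq> 0}"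

lemma z_digit_vecs_S: "z \<in> digit_vecs P S"
  using digit_vecs_mono[OF z U_subset] P_ge_2 by simp

lemma y_range: "i \<in> S \<Longrightarrow> 0 \<le> y i \<and> y i < P"
  using digit_vecs_range[OF y] .

lemma z_range: "i \<in> S \<Longrightarrow> 0 \<le> z i \<and> z i < P"
  using digit_vecs_range[OF z_digit_vecs_S] .

lemma z_nonzero_U: "z i \<noteq> 0 \<Longrightarrow> i \<in> U"
  using digit_vecs_outside[OF z] by blast

lemma support_S: "i \<in> support \<Longrightarrow> i \<in> S"
  unfolding support_def by simp

lemma outside_support: "t \<notin> support \<Longrightarrow> y t = 0 \<and> z t = 0"
  using digit_vecs_outside[OF y] digit_vecs_outside[OF z_digit_vecs_S] unfolding support_def by auto

lemma diag_entry: "i \<in> S \<Longrightarrow> P dvd g * (y i * y i - y i) + d * (z i * z i - z i)"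
  using solution unfolding idem_pair_def by force

lemma off_diag_entry: "i \<in> S \<Longrightarrow> j \<in> S \<Longrightarrow> i \<noteq> j \<Longrightarrow> P dvd g * (y i * y j) + d * (z i * z j)"
  using solution unfolding idem_pair_def by force

lemma support_not_dvd: "i \<in> support \<Longrightarrow> \<not> (P dvd y i \<and> P dvd z i)"
  using digit_dvd_eq_0 y_range z_range unfolding support_def by blast

lemma digits_eq: "i \<in> S \<Longrightarrow> P dvd y i - z i \<Longrightarrow> y i = z i"
  using digits_cong_eq y_range z_range by blast

lemma bit_iff: "i \<in> S \<Longrightarrow> y i = 0 \<or> y i = 1 \<longleftrightarrow> z i = 0 \<or> z i = 1"
proof
  assume "i \<in> S" "y i = 0 \<or> y i = 1"
  then have "P dvd d * (z i * z i - z i)" using diag_entry[of i] by auto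
  then show "z i = 0 \<or> z i = 1"
    using d P_dvd_mult_iff idempotent_digit z_range \<open>i \<in> S\<close> by blast
next
  assume "i \<in> S" "z i = 0 \<or> z i = 1"
  then have "P dvd g * (y i * y i - y i)" using diag_entry[of i] by auto
  then show "y i = 0 \<or> y i = 1"
    using g P_dvd_mult_iff idempotent_digit y_range \<open>i \<in> S\<close> by blast
qed

lemma non_bit_not_diagonal:
  assumes "i \<in> S" "2 \<le> y i"
  shows "\<not> (\<forall>t\<in>S. y t = z t)"
proof
  assume diag: "\<forall>t\<in>S. y t = z t"
  then have "P dvd (g + d) * (y i * y i - y i)"
    using diag_entry[OF assms(1)] assms(1) by (simp add: algebra_simps)
  then have "P dvd g + d"
    using not_idempotent_digit[of "y i"] y_range assms P_dvd_mult_iff by blast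
  then show False using not_diagonal diag by blast
qed

lemma support_independent:
  assumes i: "i \<in> support" and j: "j \<in> support" and "i \<noteq> j"
  shows "\<not> P dvd y i * z j - z i * y j"
proof
  assume det: "P dvd y i * z j - z i * y j"
  have iS: "i \<in> S" and jS: "j \<in> S" using i j support_S by auto
  have "P dvd g + d \<and> P dvd y i - z i"
    using dependent_entries_diagonal[OF g d diag_entry[OF iS] off_diag_entry[OF iS jS \<open>i \<noteq> j\<close>]
        det support_not_dvd[OF i] support_not_dvd[OF j]] .
  then have gd: "P dvd g + d" and yzi: "y i = z i" using digits_eq iS by auto
  obtain m where m: "m \<in> S" "y m \<noteq> z m" using not_diagonal gd by blast
  have "m \<noteq> i" using m yzi by auto
  have "m \<in> support" using m unfolding support_def by auto
  show False
  proof (cases "P dvd y m * z i - z m * y i")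
    case True
    have "P dvd g + d \<and> P dvd y m - z m"
      using dependent_entries_diagonal[OF g d diag_entry[OF m(1)] off_diag_entry[OF m(1) iS \<open>m \<noteq> i\<close>]
          True support_not_dvd[OF \<open>m \<in> support\<close>] support_not_dvd[OF i]] .
    then show False using digits_eq m by blast
  next
    case False
    have "P dvd 1 - y m - y i \<and> P dvd 1 - z m - z i"
      using independent_entries_complementary[OF g d diag_entry[OF m(1)] diag_entry[OF iS]
          off_diag_entry[OF m(1) iS \<open>m \<noteq> i\<close>] False] .
    then have "P dvd y m - z m"
      using dvd_linear_combination[of P "1 - z m - z i" "1 - y m - y i" "y m - z m" 1 "-1"] yzi
      by (simp add: algebra_simps)
    then show False using digits_eq m by blast
  qed
qed

lemma support_complementary:
  assumes i: "i \<in> support" and j: "j \<in> support" and "i \<noteq> j"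
  shows "P dvd 1 - y i - y j \<and> P dvd 1 - z i - z j"
  using independent_entries_complementary[OF g d diag_entry diag_entry off_diag_entry
      support_independent[OF assms]] support_S[OF i] support_S[OF j] \<open>i \<noteq> j\<close> by blast

text \<open>Complementarity of any two support positions forces the entries at a third one to
  agree with those at the second, making the two dependent.\<close>
lemma support_at_most_two:
  assumes "i \<in> support" "j \<in> support" "m \<in> support" "i \<noteq> j" "i \<noteq> m" "j \<noteq> m"
  shows False
proof -
  have a: "P dvd 1 - y i - y j \<and> P dvd 1 - z i - z j"
    using support_complementary assms by blast
  have b: "P dvd 1 - y i - y m \<and> P dvd 1 - z i - z m"
    using support_complementary assms by blast
  have ym: "P dvd y m - y j"
    by (rule dvd_linear_combination[OF conjunct1[OF a] conjunct1[OF b], of _ 1 "-1"]) (simp add: algebra_simps)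
  have zm: "P dvd z m - z j"
    by (rule dvd_linear_combination[OF conjunct2[OF a] conjunct2[OF b], of _ 1 "-1"]) (simp add: algebra_simps)
  have "P dvd y j * z m - z j * y m"
    by (rule dvd_linear_combination[OF zm ym, of _ "y j" "- z j"]) (simp add: algebra_simps)
  then show False using support_independent assms by blast
qed

lemma one_point_solution:
  assumes i: "i \<in> support" and only: "\<And>t. t \<in> support \<Longrightarrow> t = i"
  shows "(y, z) \<in> basis_sols S U \<union> single_sols U"
proof -
  have iS: "i \<in> S" using support_S[OF i] .
  have y_eq: "y = single_vec i (y i)" and z_eq: "z = single_vec i (z i)"
    using outside_support only unfolding single_vec_def by fastforce+
  show ?thesis
  proof (cases "y i = 0 \<or> y i = 1")
    case True
    then have "z i = 0 \<or> z i = 1" using bit_iff iS by blast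
    then have "y \<in> zero_or_basis S" "z \<in> zero_or_basis U"
      using single_vec_bit_zero_or_basis y_eq z_eq True iS z_nonzero_U by blast+
    then show ?thesis unfolding basis_sols_def by blast
  next
    case False
    have y2: "2 \<le> y i" using False y_range[OF iS] by auto
    have z2: "2 \<le> z i" using False bit_iff[OF iS] z_range[OF iS] by auto
    have "y i \<noteq> z i"
    proof
      assume "y i = z i"
      then have "\<forall>t\<in>S. y t = z t" using y_eq z_eq by (metis single_vec_def)
      then show False using non_bit_not_diagonal[OF iS y2] by blast
    qed
    then have "(i, y i, z i) \<in> U \<times> generic_pairs"
      using y2 z2 y_range[OF iS] z_range[OF iS] z_nonzero_U[of i] unfolding generic_pairs_def by auto
    then have "(y, z) \<in> single_sols U"
      unfolding single_sols_def using y_eq z_eq by (auto intro: image_eqI[where x = "(i, y i, z i)"])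
    then show ?thesis by blast
  qed
qed

lemma two_point_solution:
  assumes i: "i \<in> support" and j: "j \<in> support" and "i < j"
    and only: "\<And>t. t \<in> support \<Longrightarrow> t = i \<or> t = j"
  shows "(y, z) \<in> basis_sols S U \<union> double_sols U"
proof -
  have iS: "i \<in> S" and jS: "j \<in> S" using i j support_S by auto
  have compl: "P dvd 1 - y i - y j" "P dvd 1 - z i - z j"
    using support_complementary[OF i j] \<open>i < j\<close> by auto
  have y_eq: "y = double_vec i (y i) j (y j)" and z_eq: "z = double_vec i (z i) j (z j)"
    using outside_support only unfolding double_vec_def by fastforce+
  show ?thesis
  proof (cases "y i = 0 \<or> y i = 1")
    case True
    then have zi: "z i = 0 \<or> z i = 1" using bit_iff iS by blast
    have "y j = 1 - y i" "z j = 1 - z i"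
      using complement_bit y_range[OF jS] z_range[OF jS] compl True zi by auto
    then have "y \<in> zero_or_basis S" "z \<in> zero_or_basis U"
      using double_vec_bit_zero_or_basis y_eq z_eq True zi \<open>i < j\<close> digit_vecs_outside[OF y] z_nonzero_U
      by (metis less_irrefl)+
    then show ?thesis unfolding basis_sols_def by blast
  next
    case False
    have y2: "2 \<le> y i" using False y_range[OF iS] by auto
    have z2: "2 \<le> z i" using False bit_iff[OF iS] z_range[OF iS] by auto
    have yj: "y j = P + 1 - y i" and zj: "z j = P + 1 - z i"
      using complement_digit y_range z_range iS jS compl y2 z2 by auto
    have "y i \<noteq> z i"
    proof
      assume "y i = z i"
      then have "\<forall>t\<in>S. y t = z t" using y_eq z_eq yj zj by (metis double_vec_def)
      then show False using non_bit_not_diagonal[OF iS y2] by blast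
    qed
    then have "((i, j), y i, z i) \<in> {(i, j). i \<in> U \<and> j \<in> U \<and> i < j} \<times> generic_pairs"
      using y2 z2 y_range[OF iS] z_range[OF iS] z_nonzero_U[of i] z_nonzero_U[of j] zj \<open>i < j\<close>
      unfolding generic_pairs_def by auto
    then have "(y, z) \<in> double_sols U"
      unfolding double_sols_def using y_eq z_eq yj zj
      by (auto intro: image_eqI[where x = "((i, j), y i, z i)"])
    then show ?thesis by blast
  qed
qed

lemma solution_cases: "(y, z) \<in> basis_sols S U \<union> single_sols U \<union> double_sols U"
proof (cases "support = {}")
  case True
  then have "y = (\<lambda>_. 0)" "z = (\<lambda>_. 0)" using outside_support by auto
  then show ?thesis unfolding basis_sols_def zero_or_basis_def by auto
next
  case False
  then obtain i where i: "i \<in> support" by blast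
  show ?thesis
  proof (cases "\<exists>j\<in>support. j \<noteq> i")
    case True
    then obtain j where j: "j \<in> support" "j \<noteq> i" by blast
    have "t = i \<or> t = j" if "t \<in> support" for t
      using support_at_most_two[OF i j(1) that] j(2) by blast
    then show ?thesis
      using two_point_solution[OF i j(1)] two_point_solution[OF j(1) i] j(2)
      by (cases "i < j") (auto simp: linorder_neq_iff)
  next
    case False
    then show ?thesis using one_point_solution[OF i] by blast
  qed
qed

end

context prime_modulus
begin

lemma idem_pair_classification:
  assumes "U \<subseteq> S" "y \<in> digit_vecs P S" "z \<in> digit_vecs P U"
    and "\<not> P dvd g" "\<not> P dvd d" and "idem_pair P g d S y z"
  shows "(y, z) \<in> basis_sols S U \<union> diag_sols U \<union> single_sols U \<union> double_sols U"
proof (cases "P dvd g + d \<and> (\<forall>i\<in>S. y i = z i)")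
  case True
  have "y = z"
  proof
    fix t show "y t = z t"
      using True digit_vecs_outside[OF assms(2), of t] digit_vecs_outside[OF assms(3), of t] assms(1)
      by (cases "t \<in> S") auto
  qed
  then show ?thesis unfolding diag_sols_def using assms(3) by blast
next
  case False
  interpret nondiag_solution P g d S U y z
    using assms False by unfold_locales
  show ?thesis using solution_cases by blast
qed

lemma card_units_linear_relation:
  assumes u: "\<not> P dvd u" and v: "\<not> P dvd v"
  shows "card {(g, d). g \<in> {1..<P} \<and> d \<in> {1..<P} \<and> P dvd g * u + d * v} = nat (P - 1)"
proof -
  have "gcd v P = 1"
    using v prime_P prime_imp_coprime by (metis coprime_commute coprime_iff_gcd_eq_1)
  then obtain a b where ab: "a * v + b * P = 1" using bezout_int[of v P] by metis
  define f where "f g = (- (g * u * a)) mod P" for g  (* the unique d \<equiv> - g u / v *)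
  have f_range: "0 \<le> f g" "f g < P" for g unfolding f_def using P_ge_2 by auto
  have "v * a - 1 = P * (- b)" using ab by (simp add: algebra_simps)
  then have inverse: "P dvd v * a - 1" by simp
  have f_sol: "P dvd g * u + f g * v" for g
  proof -
    have "P dvd f g - (- (g * u * a))"
      unfolding f_def using mod_eq_dvd_iff[of "- (g * u * a) mod P" P "- (g * u * a)"] by simp
    then show ?thesis
      by (rule dvd_linear_combination[OF _ inverse, of _ _ v "- (g * u)"]) (simp add: algebra_simps)
  qed
  have "{(g, d). g \<in> {1..<P} \<and> d \<in> {1..<P} \<and> P dvd g * u + d * v} = (\<lambda>g. (g, f g)) ` {1..<P}"
  proof (rule set_eqI, rule iffI)
    fix x assume "x \<in> {(g, d). g \<in> {1..<P} \<and> d \<in> {1..<P} \<and> P dvd g * u + d * v}"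
    then obtain g d where x: "x = (g, d)" "g \<in> {1..<P}" "d \<in> {1..<P}" "P dvd g * u + d * v" by blast
    have "P dvd (d - f g) * v"
      by (rule dvd_linear_combination[OF x(4) f_sol[of g], of _ 1 "-1"]) (simp add: algebra_simps)
    then have "d = f g" using v P_dvd_mult_iff digits_cong_eq[of d "f g"] x(3) f_range by auto
    then show "x \<in> (\<lambda>g. (g, f g)) ` {1..<P}" using x by auto
  next
    fix x assume "x \<in> (\<lambda>g. (g, f g)) ` {1..<P}"
    then obtain g where x: "x = (g, f g)" "g \<in> {1..<P}" by blast
    have "f g \<noteq> 0"
    proof
      assume "f g = 0"
      then have "P dvd g * u" using f_sol[of g] by simp
      then show False using u P_dvd_mult_iff digit_dvd_eq_0[of g] x(2) by auto
    qed
    then show "x \<in> {(g, d). g \<in> {1..<P} \<and> d \<in> {1..<P} \<and> P dvd g * u + d * v}"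
      using x f_range[of g] f_sol[of g] by auto
  qed
  moreover have "inj_on (\<lambda>g. (g, f g)) {1..<P}" by (rule inj_onI) simp
  ultimately show ?thesis by (simp add: card_image)
qed

lemma idem_pair_single_vec:
  assumes "i \<in> S"
  shows "idem_pair P g d S (single_vec i a) (single_vec i b) \<longleftrightarrow> P dvd g * (a * a - a) + d * (b * b - b)"
proof
  assume "idem_pair P g d S (single_vec i a) (single_vec i b)"
  then show "P dvd g * (a * a - a) + d * (b * b - b)"
    unfolding idem_pair_def using assms by (force simp: single_vec_def)
next
  assume "P dvd g * (a * a - a) + d * (b * b - b)"
  then show "idem_pair P g d S (single_vec i a) (single_vec i b)"
    unfolding idem_pair_def single_vec_def by auto
qed

text \<open>Since \<open>a + (P + 1 - a) \<equiv> 1\<close>, the conditions at \<open>(j, j)\<close>, \<open>(i, j)\<close> and \<open>(j, i)\<close>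
  are multiples of the one at \<open>(i, i)\<close> mod \<open>P\<close>.\<close>
lemma idem_pair_double_vec:
  assumes "i \<in> S" "j \<in> S" "i \<noteq> j"
  shows "idem_pair P g d S (double_vec i a j (P + 1 - a)) (double_vec i b j (P + 1 - b))
    \<longleftrightarrow> P dvd g * (a * a - a) + d * (b * b - b)"
    (is "idem_pair P g d S ?y ?z \<longleftrightarrow> P dvd ?E")
proof
  assume "idem_pair P g d S ?y ?z"
  then show "P dvd ?E"
    unfolding idem_pair_def using assms by (force simp: double_vec_def)
next
  assume h: "P dvd ?E"
  have jj: "P dvd g * ((P + 1 - a) * (P + 1 - a) - (P + 1 - a)) + d * ((P + 1 - b) * (P + 1 - b) - (P + 1 - b))"
    by (rule dvd_linear_combination[OF h dvd_refl, of _ 1 "g * (P - 2 * a + 1) + d * (P - 2 * b + 1)"])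
      (simp add: algebra_simps)
  have ij: "P dvd g * (a * (P + 1 - a)) + d * (b * (P + 1 - b))"
    by (rule dvd_linear_combination[OF h dvd_refl, of _ "-1" "g * a + d * b"]) (simp add: algebra_simps)
  then have ji: "P dvd g * ((P + 1 - a) * a) + d * ((P + 1 - b) * b)"
    by (simp add: algebra_simps)
  show "idem_pair P g d S ?y ?z"
    unfolding idem_pair_def
  proof (intro ballI)
    fix i' j' assume "i' \<in> S" "j' \<in> S"
    show "P dvd g * (?y i' * ?y j' - (if i' = j' then ?y i' else 0)) + d * (?z i' * ?z j' - (if i' = j' then ?z i' else 0))"
      using h jj ij ji assms(3)
      by (cases "i' = i"; cases "j' = i"; cases "i' = j"; cases "j' = j") (auto simp: double_vec_def)
  qed
qed

definition unit_weights :: "nat set \<Rightarrow> (nat \<Rightarrow> int) \<Rightarrow> (nat \<Rightarrow> int) \<Rightarrow> nat" where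
  "unit_weights S y z = card {(g, d). g \<in> {1..<P} \<and> d \<in> {1..<P} \<and> idem_pair P g d S y z}"

lemma unit_weights_basis_sol: "(y, z) \<in> basis_sols S U \<Longrightarrow> unit_weights S y z = nat (P - 1) * nat (P - 1)"
proof -
  assume "(y, z) \<in> basis_sols S U"
  then have "{(g, d). g \<in> {1..<P} \<and> d \<in> {1..<P} \<and> idem_pair P g d S y z} = {1..<P} \<times> {1..<P}"
    using zero_or_basis_idem_pair unfolding basis_sols_def by auto
  then show ?thesis unfolding unit_weights_def by (simp add: card_cartesian_product)
qed

lemma unit_weights_diag_sol:
  assumes US: "U \<subseteq> S" and yz: "(y, z) \<in> diag_sols U - basis_sols S U"
  shows "unit_weights S y z = nat (P - 1)"
proof -
  obtain w where w: "w \<in> digit_vecs P U" "y = w" "z = w" using yz unfolding diag_sols_def by auto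
  have "w \<notin> zero_or_basis U" using yz w zero_or_basis_mono[OF US] unfolding basis_sols_def by auto
  then obtain i j where ij: "i \<in> U" "j \<in> U" "\<not> P dvd w i * w j - (if i = j then w i else 0)"
    using zero_or_basis_iff_idem[OF w(1)] by blast
  have "idem_pair P g d S w w \<longleftrightarrow> P dvd g * 1 + d * 1" for g d
  proof
    assume "idem_pair P g d S w w"
    then have "P dvd (g + d) * (w i * w j - (if i = j then w i else 0))"
      unfolding idem_pair_def using ij US by (force simp: algebra_simps)
    then show "P dvd g * 1 + d * 1" using ij(3) P_dvd_mult_iff by auto
  next
    assume "P dvd g * 1 + d * 1"
    then show "idem_pair P g d S w w" unfolding idem_pair_def by (auto simp: distrib_right[symmetric])
  qed
  moreover have "\<not> P dvd 1" using P_ge_2 by (simp add: zdvd_not_zless)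
  ultimately show ?thesis
    unfolding unit_weights_def using w card_units_linear_relation[of 1 1] by simp
qed

lemma unit_weights_single_sol:
  assumes US: "U \<subseteq> S" and yz: "(y, z) \<in> single_sols U"
  shows "unit_weights S y z = nat (P - 1)"
proof -
  obtain i a b where w: "i \<in> U" "(a, b) \<in> generic_pairs" "y = single_vec i a" "z = single_vec i b"
    using yz unfolding single_sols_def by auto
  then have "2 \<le> a" "a < P" "2 \<le> b" "b < P" unfolding generic_pairs_def by auto
  moreover have "idem_pair P g d S y z \<longleftrightarrow> P dvd g * (a * a - a) + d * (b * b - b)" for g d
    using idem_pair_single_vec[of i S] w US by auto
  ultimately show ?thesis
    unfolding unit_weights_def using card_units_linear_relation not_idempotent_digit by simp
qed

lemma unit_weights_double_sol:
  assumes US: "U \<subseteq> S" and yz: "(y, z) \<in> double_sols U"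
  shows "unit_weights S y z = nat (P - 1)"
proof -
  obtain i j a b where w: "i \<in> U" "j \<in> U" "i < j" "(a, b) \<in> generic_pairs"
      "y = double_vec i a j (P + 1 - a)" "z = double_vec i b j (P + 1 - b)"
    using yz unfolding double_sols_def by auto
  then have "2 \<le> a" "a < P" "2 \<le> b" "b < P" unfolding generic_pairs_def by auto
  moreover have "i \<in> S" "j \<in> S" "i \<noteq> j" using w US by auto
  note idem_pair_double_vec[OF this]
  then have "idem_pair P g d S y z \<longleftrightarrow> P dvd g * (a * a - a) + d * (b * b - b)" for g d
    using w by simp
  ultimately show ?thesis
    unfolding unit_weights_def using card_units_linear_relation not_idempotent_digit by simp
qed

lemma unit_weights_other:
  assumes "U \<subseteq> S" "y \<in> digit_vecs P S" "z \<in> digit_vecs P U"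
    and "(y, z) \<notin> basis_sols S U \<union> diag_sols U \<union> single_sols U \<union> double_sols U"
  shows "unit_weights S y z = 0"
proof -
  have "\<not> idem_pair P g d S y z" if "g \<in> {1..<P}" "d \<in> {1..<P}" for g d
    using idem_pair_classification[OF assms(1-3)] digit_dvd_eq_0[of g] digit_dvd_eq_0[of d] that assms(4)
    by auto
  then have "{(g, d). g \<in> {1..<P} \<and> d \<in> {1..<P} \<and> idem_pair P g d S y z} = {}" by blast
  then show ?thesis unfolding unit_weights_def by (metis card.empty)
qed

lemma finite_generic_pairs: "finite generic_pairs"
  by (rule finite_subset[of _ "{2..<P} \<times> {2..<P}"]) (auto simp: generic_pairs_def)

lemma card_generic_pairs: "int (card generic_pairs) = (P - 2) * (P - 3)"
proof -
  have G: "generic_pairs = {2..<P} \<times> {2..<P} - (\<lambda>a. (a, a)) ` {2..<P}"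
    unfolding generic_pairs_def by auto
  have "card ((\<lambda>a. (a, a)) ` {2..<P}) = card {2..<P}"
    by (rule card_image) (auto simp: inj_on_def)
  then have "card generic_pairs = nat (P - 2) * nat (P - 2) - nat (P - 2)"
    unfolding G by (subst card_Diff_subset) (auto simp: card_cartesian_product)
  moreover have "nat (P - 2) \<le> nat (P - 2) * nat (P - 2) \<or> P = 2" using P_ge_2 by auto
  ultimately show ?thesis using P_ge_2 by (auto simp: of_nat_diff algebra_simps)
qed

lemma card_basis_sols: "finite S \<Longrightarrow> finite U \<Longrightarrow> card (basis_sols S U) = (card S + 1) * (card U + 1)"
  unfolding basis_sols_def by (simp add: card_cartesian_product card_zero_or_basis)

lemma card_diag_sols: "finite U \<Longrightarrow> card (diag_sols U) = nat P ^ card U"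
  unfolding diag_sols_def using card_digit_vecs P_ge_2 by (simp add: card_image inj_on_def)

lemma card_diag_basis_sols:
  assumes "finite U" "U \<subseteq> S"
  shows "card (diag_sols U \<inter> basis_sols S U) = card U + 1"
proof -
  have "diag_sols U \<inter> basis_sols S U = (\<lambda>t. (t, t)) ` zero_or_basis U"
    using zero_or_basis_subset_digit_vecs[OF P_ge_2] zero_or_basis_mono[OF assms(2)]
    unfolding diag_sols_def basis_sols_def by auto
  then show ?thesis using card_zero_or_basis[OF assms(1)] by (simp add: card_image inj_on_def)
qed

lemma card_single_sols: "card (single_sols U) = card U * card generic_pairs"
proof -
  have "inj_on (\<lambda>(i, a, b). (single_vec i a, single_vec i b)) (U \<times> generic_pairs)"
  proof (rule inj_onI)
    fix u u' assume "u \<in> U \<times> generic_pairs" "u' \<in> U \<times> generic_pairs"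
      and "(\<lambda>(i, a, b). (single_vec i a, single_vec i b)) u = (\<lambda>(i, a, b). (single_vec i a, single_vec i b)) u'"
    moreover obtain i a b i' a' b' where "u = (i, a, b)" "u' = (i', a', b')" by (metis prod.collapse)
    ultimately have ab: "(a, b) \<in> generic_pairs"
      and eq: "single_vec i a = single_vec i' a'" "single_vec i b = single_vec i' b'" by auto
    then have "a \<noteq> 0" unfolding generic_pairs_def by auto
    then have "i = i'" using fun_cong[OF eq(1), of i] by (auto simp: single_vec_def split: if_splits)
    then show "u = u'"
      using fun_cong[OF eq(1), of i] fun_cong[OF eq(2), of i] \<open>u = (i, a, b)\<close> \<open>u' = (i', a', b')\<close>
      by (simp add: single_vec_def)
  qed
  then show ?thesis unfolding single_sols_def by (simp add: card_image card_cartesian_product)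
qed

lemma card_double_sols:
  assumes "finite U"
  shows "card (double_sols U) = (card U choose 2) * card generic_pairs"
proof -
  let ?A = "{(i, j). i \<in> U \<and> j \<in> U \<and> i < j}"
  have "inj_on (\<lambda>((i, j), a, b). (double_vec i a j (P + 1 - a), double_vec i b j (P + 1 - b))) (?A \<times> generic_pairs)"
  proof (rule inj_onI)
    fix u u' assume "u \<in> ?A \<times> generic_pairs" "u' \<in> ?A \<times> generic_pairs"
      and "(\<lambda>((i, j), a, b). (double_vec i a j (P + 1 - a), double_vec i b j (P + 1 - b))) u
         = (\<lambda>((i, j), a, b). (double_vec i a j (P + 1 - a), double_vec i b j (P + 1 - b))) u'"
    moreover obtain i j a b i' j' a' b' where u: "u = ((i, j), a, b)" "u' = ((i', j'), a', b')"
      by (metis prod.collapse)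
    ultimately have ij: "i < j" "i' < j'" and ab: "(a, b) \<in> generic_pairs" "(a', b') \<in> generic_pairs"
      and eq: "double_vec i a j (P + 1 - a) = double_vec i' a' j' (P + 1 - a')"
        "double_vec i b j (P + 1 - b) = double_vec i' b' j' (P + 1 - b')" by auto
    have r: "2 \<le> a" "a < P" "2 \<le> a'" "a' < P" using ab unfolding generic_pairs_def by auto
    note e = fun_cong[OF eq(1)]
    have "i = i' \<or> i = j'" using e[of i] r unfolding double_vec_def by (auto split: if_splits)
    moreover have "j = i' \<or> j = j'" using e[of j] r ij unfolding double_vec_def by (auto split: if_splits)
    moreover have "i' = i \<or> i' = j" using e[of i'] r unfolding double_vec_def by (auto split: if_splits)
    ultimately have "i = i'" "j = j'" using ij by auto
    then show "u = u'"
      using e[of i] fun_cong[OF eq(2), of i] ij u unfolding double_vec_def by auto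
  qed
  then show ?thesis
    unfolding double_sols_def using card_ordered_pairs[OF assms]
    by (simp add: card_image card_cartesian_product)
qed

lemma sols_subset_digit_vecs:
  assumes "U \<subseteq> S"
  shows "basis_sols S U \<union> diag_sols U \<union> single_sols U \<union> double_sols U \<subseteq> digit_vecs P S \<times> digit_vecs P U"
proof -
  have "basis_sols S U \<subseteq> digit_vecs P S \<times> digit_vecs P U"
    unfolding basis_sols_def using zero_or_basis_subset_digit_vecs P_ge_2 by blast
  moreover have "diag_sols U \<subseteq> digit_vecs P S \<times> digit_vecs P U"
    unfolding diag_sols_def using digit_vecs_mono[OF _ assms] P_ge_2 by auto
  moreover have "single_sols U \<subseteq> digit_vecs P S \<times> digit_vecs P U"
    unfolding single_sols_def generic_pairs_def digit_vecs_def single_vec_def using assms by auto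
  moreover have "double_sols U \<subseteq> digit_vecs P S \<times> digit_vecs P U"
    unfolding double_sols_def generic_pairs_def digit_vecs_def double_vec_def using assms by auto
  ultimately show ?thesis by blast
qed

lemma basis_sols_disjoint:
  "basis_sols S U \<inter> single_sols U = {}" "basis_sols S U \<inter> double_sols U = {}"
proof -
  show "basis_sols S U \<inter> single_sols U = {}"
  proof (rule ccontr)
    assume "basis_sols S U \<inter> single_sols U \<noteq> {}"
    then obtain i a b where "single_vec i a \<in> zero_or_basis S" "(a, b) \<in> generic_pairs"
      unfolding basis_sols_def single_sols_def by auto
    then show False
      using zero_or_basis_values[of "single_vec i a" S i] unfolding generic_pairs_def single_vec_def by auto
  qed
  show "basis_sols S U \<inter> double_sols U = {}"
  proof (rule ccontr)
    assume "basis_sols S U \<inter> double_sols U \<noteq> {}"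
    then obtain i j a b where "double_vec i a j (P + 1 - a) \<in> zero_or_basis S" "(a, b) \<in> generic_pairs"
      unfolding basis_sols_def double_sols_def by auto
    then show False
      using zero_or_basis_values[of "double_vec i a j (P + 1 - a)" S i]
      unfolding generic_pairs_def double_vec_def by auto
  qed
qed

lemma diag_sols_disjoint:
  "diag_sols U \<inter> single_sols U = {}" "diag_sols U \<inter> double_sols U = {}"
proof -
  show "diag_sols U \<inter> single_sols U = {}"
  proof (rule ccontr)
    assume "diag_sols U \<inter> single_sols U \<noteq> {}"
    then obtain i a b where "single_vec i a = single_vec i b" "(a, b) \<in> generic_pairs"
      unfolding diag_sols_def single_sols_def by auto
    then show False
      using fun_cong[of "single_vec i a" "single_vec i b" i] unfolding generic_pairs_def single_vec_def by auto
  qed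
  show "diag_sols U \<inter> double_sols U = {}"
  proof (rule ccontr)
    assume "diag_sols U \<inter> double_sols U \<noteq> {}"
    then obtain i j a b where "double_vec i a j (P + 1 - a) = double_vec i b j (P + 1 - b)"
        "(a, b) \<in> generic_pairs"
      unfolding diag_sols_def double_sols_def by auto
    then show False
      using fun_cong[of "double_vec i a j (P + 1 - a)" "double_vec i b j (P + 1 - b)" i]
      unfolding generic_pairs_def double_vec_def by auto
  qed
qed

lemma single_double_sols_disjoint: "single_sols U \<inter> double_sols U = {}"
proof (rule ccontr)
  assume "single_sols U \<inter> double_sols U \<noteq> {}"
  then obtain i0 a0 i j a b where e: "single_vec i0 a0 = double_vec i a j (P + 1 - a)"
      "(a, b) \<in> generic_pairs" "i < j"
    unfolding double_sols_def single_sols_def by auto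
  have "2 \<le> a" "a < P" using e(2) unfolding generic_pairs_def by auto
  then show False
    using fun_cong[OF e(1), of i] fun_cong[OF e(1), of j] e(3)
    unfolding single_vec_def double_vec_def by (auto split: if_splits)
qed

lemmas sols_disjoint = basis_sols_disjoint diag_sols_disjoint single_double_sols_disjoint

lemma sum_unit_weights_families:
  assumes S: "finite S" and US: "U \<subseteq> S"
  shows "(\<Sum>t\<in>digit_vecs P S \<times> digit_vecs P U. unit_weights S (fst t) (snd t))
    = card (basis_sols S U) * (nat (P - 1) * nat (P - 1))
      + (card (diag_sols U - basis_sols S U) + card (single_sols U) + card (double_sols U)) * nat (P - 1)"
proof -
  have fU: "finite U" using finite_subset[OF US S] .
  let ?W = "\<lambda>t. unit_weights S (fst t) (snd t)"
  let ?Z = "basis_sols S U" and ?F = "diag_sols U - basis_sols S U"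
    and ?S = "single_sols U" and ?D = "double_sols U"
  have fin: "finite ?Z" "finite (diag_sols U)" "finite ?S" "finite ?D"
    unfolding basis_sols_def diag_sols_def single_sols_def double_sols_def
    using S fU finite_zero_or_basis finite_digit_vecs P_ge_2 finite_generic_pairs
      finite_subset[of "{(i, j). i \<in> U \<and> j \<in> U \<and> i < j}" "U \<times> U"]
    by auto
  have "(\<Sum>t\<in>digit_vecs P S \<times> digit_vecs P U. ?W t) = (\<Sum>t\<in>?Z \<union> ?F \<union> ?S \<union> ?D. ?W t)"
  proof (rule sum.mono_neutral_right)
    show "finite (digit_vecs P S \<times> digit_vecs P U)" using finite_digit_vecs S fU P_ge_2 by simp
    show "?Z \<union> ?F \<union> ?S \<union> ?D \<subseteq> digit_vecs P S \<times> digit_vecs P U"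
      using sols_subset_digit_vecs[OF US] by blast
    show "\<forall>t\<in>digit_vecs P S \<times> digit_vecs P U - (?Z \<union> ?F \<union> ?S \<union> ?D). ?W t = 0"
    proof
      fix t assume "t \<in> digit_vecs P S \<times> digit_vecs P U - (?Z \<union> ?F \<union> ?S \<union> ?D)"
      then show "?W t = 0" by (cases t) (auto simp: unit_weights_other[OF US])
    qed
  qed
  also have "\<dots> = sum ?W ?Z + sum ?W ?F + sum ?W ?S + sum ?W ?D"
  proof -
    have "sum ?W (?Z \<union> ?F \<union> ?S \<union> ?D) = sum ?W (?Z \<union> ?F \<union> ?S) + sum ?W ?D"
      by (rule sum.union_disjoint) (simp add: fin, simp add: fin, use sols_disjoint in blast)
    moreover have "sum ?W (?Z \<union> ?F \<union> ?S) = sum ?W (?Z \<union> ?F) + sum ?W ?S"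
      by (rule sum.union_disjoint) (simp add: fin, simp add: fin, use sols_disjoint in blast)
    moreover have "sum ?W (?Z \<union> ?F) = sum ?W ?Z + sum ?W ?F"
      by (rule sum.union_disjoint) (simp_all add: fin)
    ultimately show ?thesis by simp
  qed
  also have "\<dots> = card ?Z * (nat (P - 1) * nat (P - 1)) + (card ?F + card ?S + card ?D) * nat (P - 1)"
  proof -
    have "sum ?W ?Z = card ?Z * (nat (P - 1) * nat (P - 1))"
      using unit_weights_basis_sol by (simp add: sum.cong[OF refl, of _ "\<lambda>_. nat (P - 1) * nat (P - 1)"])
    moreover have "sum ?W ?F = card ?F * nat (P - 1)"
      using unit_weights_diag_sol[OF US] by (simp add: sum.cong[OF refl, of _ "\<lambda>_. nat (P - 1)"])
    moreover have "sum ?W ?S = card ?S * nat (P - 1)"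
      using unit_weights_single_sol[OF US] by (simp add: sum.cong[OF refl, of _ "\<lambda>_. nat (P - 1)"])
    moreover have "sum ?W ?D = card ?D * nat (P - 1)"
      using unit_weights_double_sol[OF US] by (simp add: sum.cong[OF refl, of _ "\<lambda>_. nat (P - 1)"])
    ultimately show ?thesis by (simp add: algebra_simps)
  qed
  finally show ?thesis .
qed

lemma sum_unit_weights:
  assumes S: "finite S" and US: "U \<subseteq> S"
  shows "int (\<Sum>t\<in>digit_vecs P S \<times> digit_vecs P U. unit_weights S (fst t) (snd t))
    = (P - 1)^2 * (int (card S) + 1) * (int (card U) + 1)
      + (P - 1) * (P ^ card U - (int (card U) + 1)
        + (int (card U) + int (card U choose 2)) * (P - 2) * (P - 3))"
proof -
  have fU: "finite U" using finite_subset[OF US S] .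
  have fin: "finite (diag_sols U)" unfolding diag_sols_def using finite_digit_vecs fU P_ge_2 by simp
  have "card (diag_sols U - basis_sols S U) = card (diag_sols U) - card (diag_sols U \<inter> basis_sols S U)"
    by (rule card_Diff_subset_Int) (use fin in simp)
  moreover have "card (diag_sols U \<inter> basis_sols S U) \<le> card (diag_sols U)"
    by (rule card_mono[OF fin]) blast
  ultimately have "int (card (diag_sols U - basis_sols S U))
      = int (card (diag_sols U)) - int (card (diag_sols U \<inter> basis_sols S U))"
    by (simp add: of_nat_diff)
  also have "\<dots> = P ^ card U - (int (card U) + 1)"
    using card_diag_sols[OF fU] card_diag_basis_sols[OF fU US] P_ge_2 by simp
  finally have diag: "int (card (diag_sols U - basis_sols S U)) = P ^ card U - (int (card U) + 1)" .
  have basis: "int (card (basis_sols S U)) = (int (card S) + 1) * (int (card U) + 1)"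
    using card_basis_sols[OF S fU] by (simp add: algebra_simps)
  have single: "int (card (single_sols U)) = int (card U) * ((P - 2) * (P - 3))"
    using card_single_sols[of U] card_generic_pairs by simp
  have double: "int (card (double_sols U)) = int (card U choose 2) * ((P - 2) * (P - 3))"
    using card_double_sols[OF fU] card_generic_pairs by simp
  have P1: "int (nat (P - 1)) = P - 1" using P_ge_2 by simp
  show ?thesis
    unfolding sum_unit_weights_families[OF assms] of_nat_add of_nat_mult basis single double diag P1
    by (simp add: algebra_simps power2_eq_square)
qed

definition solutions :: "nat set \<Rightarrow> nat set \<Rightarrow> int \<Rightarrow> int \<Rightarrow> ((nat \<Rightarrow> int) \<times> (nat \<Rightarrow> int)) set" where
  "solutions S U g d = {(y, z). y \<in> digit_vecs P S \<and> z \<in> digit_vecs P U \<and> idem_pair P g d S y z}"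

lemma finite_solutions: "finite S \<Longrightarrow> finite U \<Longrightarrow> finite (solutions S U g d)"
  by (rule finite_subset[of _ "digit_vecs P S \<times> digit_vecs P U"])
    (use finite_digit_vecs P_ge_2 in \<open>auto simp: solutions_def\<close>)

lemma sum_card_unit_weight_solutions:
  assumes "finite S" "U \<subseteq> S"
  shows "int (\<Sum>gd\<in>{1..<P} \<times> {1..<P}. card (solutions S U (fst gd) (snd gd)))
    = (P - 1)^2 * (int (card S) + 1) * (int (card U) + 1)
      + (P - 1) * (P ^ card U - (int (card U) + 1)
        + (int (card U) + int (card U choose 2)) * (P - 2) * (P - 3))"
proof -
  let ?T = "digit_vecs P S \<times> digit_vecs P U"
  have "finite U" using finite_subset assms by blast
  then have "finite ?T" using finite_digit_vecs P_ge_2 assms by simp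
  have "(\<Sum>gd\<in>{1..<P} \<times> {1..<P}. card (solutions S U (fst gd) (snd gd)))
      = (\<Sum>gd\<in>{1..<P} \<times> {1..<P}. card {t \<in> ?T. idem_pair P (fst gd) (snd gd) S (fst t) (snd t)})"
    unfolding solutions_def by (intro sum.cong refl arg_cong[where f = card]) auto
  also have "\<dots> = (\<Sum>t\<in>?T. card {gd \<in> {1..<P} \<times> {1..<P}. idem_pair P (fst gd) (snd gd) S (fst t) (snd t)})"
    by (rule sum_multicount_gen) (use \<open>finite ?T\<close> in auto)
  also have "\<dots> = (\<Sum>t\<in>?T. unit_weights S (fst t) (snd t))"
    unfolding unit_weights_def by (intro sum.cong refl arg_cong[where f = card]) auto
  finally show ?thesis using sum_unit_weights[OF assms] by simp
qed

lemma solutions_unit_zero: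
  assumes "\<not> P dvd g"
  shows "solutions S U g 0 = zero_or_basis S \<times> digit_vecs P U"
proof -
  have "idem_pair P g 0 S y z \<longleftrightarrow> y \<in> zero_or_basis S" if "y \<in> digit_vecs P S" for y z
    unfolding idem_pair_def zero_or_basis_iff_idem[OF that] using assms P_dvd_mult_iff by auto
  then show ?thesis
    unfolding solutions_def using zero_or_basis_subset_digit_vecs[OF P_ge_2] by auto
qed

lemma solutions_zero_unit:
  assumes "\<not> P dvd d" "U \<subseteq> S"
  shows "solutions S U 0 d = digit_vecs P S \<times> zero_or_basis U"
proof -
  have "idem_pair P 0 d S y z \<longleftrightarrow> z \<in> zero_or_basis U" if z: "z \<in> digit_vecs P U" for y z
  proof -
    have "z i = 0" if "i \<in> S" "i \<notin> U" for i using digit_vecs_outside[OF z] that by simp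
    then have "idem_pair P 0 d S y z \<longleftrightarrow> (\<forall>i\<in>U. \<forall>j\<in>U. P dvd z i * z j - (if i = j then z i else 0))"
      unfolding idem_pair_def using assms P_dvd_mult_iff by (auto 0 3)
    then show ?thesis using zero_or_basis_iff_idem[OF z] by simp
  qed
  then show ?thesis
    unfolding solutions_def using zero_or_basis_subset_digit_vecs[OF P_ge_2] by auto
qed

lemma sum_card_solutions:
  assumes S: "finite S" and US: "U \<subseteq> S"
  shows "int (\<Sum>gd\<in>{0..<P} \<times> {0..<P}. card (solutions S U (fst gd) (snd gd)))
    = P ^ card S * P ^ card U + (P - 1) * (int (card S) + 1) * P ^ card U
      + (P - 1) * P ^ card S * (int (card U) + 1)
      + (P - 1)^2 * (int (card S) + 1) * (int (card U) + 1)
      + (P - 1) * (P ^ card U - (int (card U) + 1)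
        + (int (card U) + int (card U choose 2)) * (P - 2) * (P - 3))"
proof -
  have fU: "finite U" using finite_subset[OF US S] .
  let ?f = "\<lambda>gd. card (solutions S U (fst gd) (snd gd))"
  have units: "\<not> P dvd a" if "a \<in> {1..<P}" for a using digit_dvd_eq_0[of a] that by auto
  have "{0..<P} \<times> {0..<P} = {(0, 0)} \<union> ({1..<P} \<times> {0}) \<union> ({0} \<times> {1..<P}) \<union> ({1..<P} \<times> {1..<P})"
    using P_ge_2 by auto
  then have "sum ?f ({0..<P} \<times> {0..<P})
      = ?f (0, 0) + sum ?f ({1..<P} \<times> {0}) + sum ?f ({0} \<times> {1..<P}) + sum ?f ({1..<P} \<times> {1..<P})"
    using P_ge_2 by (simp only:) (subst sum.union_disjoint; auto)+
  also have "?f (0, 0) = nat P ^ card S * nat P ^ card U"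
  proof -
    have "solutions S U 0 0 = digit_vecs P S \<times> digit_vecs P U"
      unfolding solutions_def idem_pair_def by auto
    then show ?thesis
      using card_digit_vecs[OF S] card_digit_vecs[OF fU] P_ge_2 by (simp add: card_cartesian_product)
  qed
  also have "sum ?f ({1..<P} \<times> {0}) = nat (P - 1) * ((card S + 1) * nat P ^ card U)"
  proof -
    have "?f gd = (card S + 1) * nat P ^ card U" if "gd \<in> {1..<P} \<times> {0}" for gd
      using that solutions_unit_zero[OF units] card_zero_or_basis[OF S] card_digit_vecs[OF fU] P_ge_2
      by (auto simp: card_cartesian_product)
    then show ?thesis by (simp cong: sum.cong add: card_cartesian_product)
  qed
  also have "sum ?f ({0} \<times> {1..<P}) = nat (P - 1) * (nat P ^ card S * (card U + 1))"
  proof -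
    have "?f gd = nat P ^ card S * (card U + 1)" if "gd \<in> {0} \<times> {1..<P}" for gd
      using that solutions_zero_unit[OF units US] card_zero_or_basis[OF fU] card_digit_vecs[OF S] P_ge_2
      by (auto simp: card_cartesian_product)
    then show ?thesis by (simp cong: sum.cong add: card_cartesian_product)
  qed
  finally show ?thesis
    using sum_card_unit_weight_solutions[OF S US] P_ge_2
    by (simp add: card_cartesian_product of_nat_power algebra_simps power2_eq_square)
qed

end

text \<open>The closure condition on the rows \<open>x\<close> (row \<open>0\<close>), \<open>y\<close> (row \<open>k\<close>) and \<open>z\<close> (row \<open>l\<close>)
  of the matrix, where \<open>S\<close> is the set of columns after \<open>k\<close> other than \<open>l\<close> and \<open>U\<close> the set
  of columns after \<open>l\<close> (see \<open>alpha_matrix.col_closed_iff\<close>).\<close>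
definition subring_cond :: "int \<Rightarrow> nat \<Rightarrow> nat \<Rightarrow> nat set \<Rightarrow> nat set \<Rightarrow>
    (nat \<Rightarrow> int) \<Rightarrow> (nat \<Rightarrow> int) \<Rightarrow> (nat \<Rightarrow> int) \<Rightarrow> bool" where
  "subring_cond P k l S U x y z \<longleftrightarrow>
     (y l \<noteq> 0 \<and> x k = 0 \<and> z \<in> zero_or_basis U) \<or> (y l = 0 \<and> idem_pair P (x k) (x l) S y z)"

definition assemble_params :: "nat \<Rightarrow> nat \<Rightarrow>
    (nat \<Rightarrow> int) \<times> (int \<times> int \<times> int) \<times> (nat \<Rightarrow> int) \<times> (nat \<Rightarrow> int) \<Rightarrow>
    (nat \<Rightarrow> int) \<times> (nat \<Rightarrow> int) \<times> (nat \<Rightarrow> int)" where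
  "assemble_params k l = (\<lambda>(x, (g, d, b), (y, z)). (x(k := g, l := d), y(l := b), z))"

context prime_modulus
begin

text \<open>\<open>core_params\<close> collects the entries constrained by \<open>subring_cond\<close>: the triple
  \<open>(x\<^sub>k, x\<^sub>l, y\<^sub>l) = (g, d, b)\<close>, and \<open>y\<close> on \<open>S\<close> and \<open>z\<close> in the fiber over it.\<close>
definition core_fiber :: "nat set \<Rightarrow> nat set \<Rightarrow> int \<Rightarrow> int \<Rightarrow> int \<Rightarrow> ((nat \<Rightarrow> int) \<times> (nat \<Rightarrow> int)) set" where
  "core_fiber S U g d b = (if b = 0 then solutions S U g d
     else if g = 0 then digit_vecs P S \<times> zero_or_basis U else {})"

definition core_params :: "nat set \<Rightarrow> nat set \<Rightarrow> ((int \<times> int \<times> int) \<times> (nat \<Rightarrow> int) \<times> (nat \<Rightarrow> int)) set" where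
  "core_params S U = Sigma ({0..<P} \<times> {0..<P} \<times> {0..<P}) (\<lambda>(g, d, b). core_fiber S U g d b)"

lemma sum_card_core_fiber:
  assumes S: "finite S" and US: "U \<subseteq> S"
  shows "(\<Sum>b\<in>{0..<P}. card (core_fiber S U g d b))
    = card (solutions S U g d) + (if g = 0 then nat (P - 1) * (nat P ^ card S * (card U + 1)) else 0)"
proof -
  have fU: "finite U" using finite_subset[OF US S] .
  have "{0..<P} = insert 0 {1..<P}" using P_ge_2 by auto
  then have "(\<Sum>b\<in>{0..<P}. card (core_fiber S U g d b))
      = card (solutions S U g d) + (\<Sum>b\<in>{1..<P}. card (core_fiber S U g d b))"
    by (simp add: core_fiber_def)
  also have "(\<Sum>b\<in>{1..<P}. card (core_fiber S U g d b))
      = (\<Sum>b\<in>{1..<P}. if g = 0 then nat P ^ card S * (card U + 1) else 0)"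
    using card_digit_vecs[OF S] card_zero_or_basis[OF fU] P_ge_2
    by (intro sum.cong refl) (simp add: core_fiber_def card_cartesian_product)
  finally show ?thesis by simp
qed

lemma card_core_params:
  assumes S: "finite S" and US: "U \<subseteq> S"
  shows "int (card (core_params S U)) = P * (P - 1) * P ^ card S * (int (card U) + 1)
    + int (\<Sum>gd\<in>{0..<P} \<times> {0..<P}. card (solutions S U (fst gd) (snd gd)))"
proof -
  have fU: "finite U" using finite_subset[OF US S] .
  let ?c = "nat (P - 1) * (nat P ^ card S * (card U + 1))"
  have "finite (core_fiber S U g d b)" for g d b
    unfolding core_fiber_def
    using finite_solutions[OF S fU] finite_digit_vecs[OF S] finite_zero_or_basis[OF fU] P_ge_2 by simp
  then have "card (core_params S U) = (\<Sum>(g, d, b)\<in>{0..<P} \<times> {0..<P} \<times> {0..<P}. card (core_fiber S U g d b))"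
    unfolding core_params_def by (simp add: card_SigmaI case_prod_beta)
  also have "\<dots> = (\<Sum>g\<in>{0..<P}. \<Sum>d\<in>{0..<P}. \<Sum>b\<in>{0..<P}. card (core_fiber S U g d b))"
    by (simp add: sum.cartesian_product split_def)
  also have "\<dots> = (\<Sum>g\<in>{0..<P}. \<Sum>d\<in>{0..<P}. card (solutions S U g d) + (if g = 0 then ?c else 0))"
    using sum_card_core_fiber[OF S US] by (intro sum.cong refl) simp
  also have "\<dots> = (\<Sum>gd\<in>{0..<P} \<times> {0..<P}. card (solutions S U (fst gd) (snd gd))) + nat P * ?c"
    using P_ge_2 by (simp add: sum.distrib sum.cartesian_product split_def sum_distrib_left[symmetric])
  finally show ?thesis using P_ge_2 by (simp add: algebra_simps of_nat_power)
qed

lemma inj_on_assemble_params: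
  assumes "k \<noteq> l" "l \<notin> S"
  shows "inj_on (assemble_params k l) (digit_vecs P (D - {k, l}) \<times> core_params S U)"
proof (rule inj_onI)
  fix u v
  assume u: "u \<in> digit_vecs P (D - {k, l}) \<times> core_params S U"
    and v: "v \<in> digit_vecs P (D - {k, l}) \<times> core_params S U"
    and eq: "assemble_params k l u = assemble_params k l v"
  obtain x g d b y z where uu: "u = (x, (g, d, b), (y, z))" by (metis prod.collapse)
  obtain x' g' d' b' y' z' where vv: "v = (x', (g', d', b'), (y', z'))" by (metis prod.collapse)
  have y: "y \<in> digit_vecs P S" "y' \<in> digit_vecs P S"
    using u v uu vv unfolding core_params_def core_fiber_def solutions_def by (auto split: if_splits)
  have ex: "x(k := g, l := d) = x'(k := g', l := d')" and ey: "y(l := b) = y'(l := b')" and "z = z'"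
    using eq uu vv unfolding assemble_params_def by auto
  moreover have "g = g'" "d = d'" "b = b'"
    using fun_cong[OF ex, of k] fun_cong[OF ex, of l] fun_cong[OF ey, of l] assms(1) by auto
  moreover have "x = x'"
  proof
    fix t show "x t = x' t"
      using fun_cong[OF ex, of t] u v uu vv digit_vecs_outside[of x P "D - {k, l}" t]
        digit_vecs_outside[of x' P "D - {k, l}" t]
      by (cases "t = k \<or> t = l") auto
  qed
  moreover have "y = y'"
  proof
    fix t show "y t = y' t"
      using fun_cong[OF ey, of t] digit_vecs_outside[OF y(1)] digit_vecs_outside[OF y(2)] assms(2)
      by (cases "t = l") auto
  qed
  ultimately show "u = v" using uu vv by simp
qed

lemma assemble_params_image:
  assumes D: "k \<in> D" "l \<in> D" "k \<noteq> l" and "l \<notin> S" "U \<subseteq> S"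
  shows "assemble_params k l ` (digit_vecs P (D - {k, l}) \<times> core_params S U)
    = {(x, y, z). x \<in> digit_vecs P D \<and> y \<in> digit_vecs P (insert l S) \<and> z \<in> digit_vecs P U
        \<and> subring_cond P k l S U x y z}"
proof (rule set_eqI, rule iffI)
  fix w assume "w \<in> assemble_params k l ` (digit_vecs P (D - {k, l}) \<times> core_params S U)"
  then obtain x g d b y z where x: "x \<in> digit_vecs P (D - {k, l})"
      and core: "((g, d, b), (y, z)) \<in> core_params S U" and w: "w = assemble_params k l (x, (g, d, b), (y, z))"
    by auto
  have r: "g \<in> {0..<P}" "d \<in> {0..<P}" "b \<in> {0..<P}" "y \<in> digit_vecs P S" "z \<in> digit_vecs P U"
    and c: "(b \<noteq> 0 \<and> g = 0 \<and> z \<in> zero_or_basis U) \<or> (b = 0 \<and> idem_pair P g d S y z)"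
    using core zero_or_basis_subset_digit_vecs[OF P_ge_2]
    unfolding core_params_def core_fiber_def solutions_def by (auto split: if_splits)
  have "idem_pair P g d S (y(l := b)) z = idem_pair P g d S y z"
    by (rule idem_pair_cong) (use assms(4) in auto)
  then show "w \<in> {(x, y, z). x \<in> digit_vecs P D \<and> y \<in> digit_vecs P (insert l S) \<and> z \<in> digit_vecs P U
        \<and> subring_cond P k l S U x y z}"
    using w x r c D unfolding assemble_params_def subring_cond_def digit_vecs_def by auto
next
  fix w assume "w \<in> {(x, y, z). x \<in> digit_vecs P D \<and> y \<in> digit_vecs P (insert l S) \<and> z \<in> digit_vecs P U
        \<and> subring_cond P k l S U x y z}"
  then obtain x y z where w: "w = (x, y, z)" and x: "x \<in> digit_vecs P D"
      and y: "y \<in> digit_vecs P (insert l S)" and z: "z \<in> digit_vecs P U" and cond: "subring_cond P k l S U x y z"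
    by auto
  have r: "x k \<in> {0..<P}" "x l \<in> {0..<P}" "y l \<in> {0..<P}"
    using x y D unfolding digit_vecs_def by auto
  have "idem_pair P (x k) (x l) S (y(l := 0)) z = idem_pair P (x k) (x l) S y z"
    by (rule idem_pair_cong) (use assms(4) in auto)
  then have "((x k, x l, y l), (y(l := 0), z)) \<in> core_params S U"
    using r y z cond unfolding core_params_def core_fiber_def solutions_def subring_cond_def digit_vecs_def
    by auto
  moreover have "x(k := 0, l := 0) \<in> digit_vecs P (D - {k, l})" using x unfolding digit_vecs_def by auto
  moreover have "w = assemble_params k l (x(k := 0, l := 0), (x k, x l, y l), (y(l := 0), z))"
    unfolding assemble_params_def using w D(3) by auto
  ultimately show "w \<in> assemble_params k l ` (digit_vecs P (D - {k, l}) \<times> core_params S U)" by blast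
qed

lemma card_subring_params:
  assumes "k \<in> D" "l \<in> D" "k \<noteq> l" "l \<notin> S" "U \<subseteq> S"
  shows "card {(x, y, z). x \<in> digit_vecs P D \<and> y \<in> digit_vecs P (insert l S) \<and> z \<in> digit_vecs P U
        \<and> subring_cond P k l S U x y z}
    = card (digit_vecs P (D - {k, l})) * card (core_params S U)"
proof -
  have "card (assemble_params k l ` (digit_vecs P (D - {k, l}) \<times> core_params S U))
      = card (digit_vecs P (D - {k, l}) \<times> core_params S U)"
    by (rule card_image[OF inj_on_assemble_params[OF assms(3,4)]])
  then show ?thesis unfolding assemble_params_image[OF assms] by (simp add: card_cartesian_product)
qed

end

section \<open>Matrices of type \<open>\<alpha>\<close> and their column span\<close>

text \<open>\<open>alpha_exp k l r\<close> is the exponent \<open>e\<^sub>r\<^sub>+\<^sub>1\<close> of the composition \<open>\<alpha>\<close>, and the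
  entry of \<open>alpha_mat\<close> in row \<open>r\<close> and column \<open>s\<close> (\<open>r < s < n - 1\<close>) is \<open>P\<close> times the
  digit \<open>alpha_row k l x y z r s\<close>; rows other than \<open>0\<close>, \<open>k\<close>, \<open>l\<close> have diagonal \<open>P\<close>,
  so their off-diagonal entries \<open>p a\<^sub>r\<^sub>s\<close> with \<open>0 \<le> p a\<^sub>r\<^sub>s < p\<close> vanish.\<close>
definition alpha_exp :: "nat \<Rightarrow> nat \<Rightarrow> nat \<Rightarrow> nat" where
  "alpha_exp k l r = (if r = 0 \<or> r = k \<or> r = l then 2 else 1)"

definition alpha_row :: "nat \<Rightarrow> nat \<Rightarrow> (nat \<Rightarrow> int) \<Rightarrow> (nat \<Rightarrow> int) \<Rightarrow> (nat \<Rightarrow> int) \<Rightarrow> nat \<Rightarrow> nat \<Rightarrow> int" where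
  "alpha_row k l x y z r s = (if r = 0 then x s else if r = k then y s else if r = l then z s else 0)"

definition alpha_mat :: "int \<Rightarrow> nat \<Rightarrow> nat \<Rightarrow> nat \<Rightarrow> (nat \<Rightarrow> int) \<Rightarrow> (nat \<Rightarrow> int) \<Rightarrow> (nat \<Rightarrow> int) \<Rightarrow>
    nat \<Rightarrow> nat \<Rightarrow> int" where
  "alpha_mat P n k l x y z r s =
    (if r < n \<and> s < n then
       (if s = n - 1 then 1 else if r = s then P ^ alpha_exp k l r
        else if r < s then P * alpha_row k l x y z r s else 0)
     else 0)"

locale alpha_matrix = prime_modulus +
  fixes n k l :: nat and x y z :: "nat \<Rightarrow> int"
  assumes n_ge_4: "4 \<le> n" and k_pos: "1 \<le> k" and k_less_l: "k < l" and l_less: "l < n - 1"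
    and x: "x \<in> digit_vecs P {1..<n - 1}" and y: "y \<in> digit_vecs P {Suc k..<n - 1}"
    and z: "z \<in> digit_vecs P {Suc l..<n - 1}"
begin

abbreviation A :: "nat \<Rightarrow> nat \<Rightarrow> int" where
  "A \<equiv> alpha_mat P n k l x y z"

definition unit_rows :: "nat set" where "unit_rows = {1..<n - 1} - {k, l}"
definition after_k :: "nat set" where "after_k = {Suc k..<n - 1} - {l}"
definition after_l :: "nat set" where "after_l = {Suc l..<n - 1}"

lemma index_sets:
  "{Suc l..<n - 1} = after_l" "{Suc k..<n - 1} = insert l after_k" "l \<notin> after_k"
  "{Suc 0..<n - 1} = insert k (insert l unit_rows)" "k \<notin> insert l unit_rows" "l \<notin> unit_rows"
  "after_l \<subseteq> unit_rows" "after_k \<subseteq> unit_rows" "finite unit_rows" "finite after_k"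
  using k_pos k_less_l l_less unfolding after_l_def after_k_def unit_rows_def by auto

lemma row_sum:
  assumes r: "r < n - 1"
  shows "(\<Sum>t<n. c t * A r t)
    = c (n - 1) + P ^ alpha_exp k l r * c r + P * (\<Sum>t\<in>{Suc r..<n - 1}. alpha_row k l x y z r t * c t)"
proof -
  have n: "n = Suc (n - 1)" using n_ge_4 by simp
  have "(\<Sum>t<n. c t * A r t) = (\<Sum>t<n - 1. c t * A r t) + c (n - 1) * A r (n - 1)"
    by (subst n) (simp add: lessThan_Suc)
  also have "{..<n - 1} = {..<r} \<union> ({r} \<union> {Suc r..<n - 1})" using r by auto
  also have "(\<Sum>t\<in>{..<r} \<union> ({r} \<union> {Suc r..<n - 1}). c t * A r t)
      = (\<Sum>t<r. c t * A r t) + (c r * A r r + (\<Sum>t\<in>{Suc r..<n - 1}. c t * A r t))"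
    by (subst sum.union_disjoint; auto)+
  also have "(\<Sum>t<r. c t * A r t) = 0" by (rule sum.neutral) (auto simp: alpha_mat_def)
  also have "(\<Sum>t\<in>{Suc r..<n - 1}. c t * A r t) = P * (\<Sum>t\<in>{Suc r..<n - 1}. alpha_row k l x y z r t * c t)"
    unfolding sum_distrib_left by (rule sum.cong) (auto simp: alpha_mat_def)
  moreover have "r < n" "r \<noteq> n - 1" using r by auto
  ultimately show ?thesis by (simp add: alpha_mat_def)
qed

lemma row_sum_last: "(\<Sum>t<n. c t * A (n - 1) t) = c (n - 1)"
proof -
  have n: "n = Suc (n - 1)" using n_ge_4 by simp
  have "(\<Sum>t<n. c t * A (n - 1) t) = (\<Sum>t<n - 1. c t * A (n - 1) t) + c (n - 1) * A (n - 1) (n - 1)"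
    by (subst n) (simp add: lessThan_Suc)
  also have "(\<Sum>t<n - 1. c t * A (n - 1) t) = 0" by (rule sum.neutral) (auto simp: alpha_mat_def)
  finally show ?thesis using n_ge_4 by (simp add: alpha_mat_def)
qed

lemma row_sum_0:
  "(\<Sum>t<n. c t * A 0 t) = c (n - 1) + P^2 * c 0 + P * (x k * c k + x l * c l + (\<Sum>t\<in>unit_rows. x t * c t))"
proof -
  have "(\<Sum>t\<in>{Suc 0..<n - 1}. alpha_row k l x y z 0 t * c t) = x k * c k + x l * c l + (\<Sum>t\<in>unit_rows. x t * c t)"
    unfolding index_sets(4) using index_sets(5,6,9) by (simp add: alpha_row_def)
  then show ?thesis using row_sum[of 0 c] l_less by (simp add: alpha_exp_def)
qed

lemma row_sum_k: "(\<Sum>t<n. c t * A k t) = c (n - 1) + P^2 * c k + P * (y l * c l + (\<Sum>t\<in>after_k. y t * c t))"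
proof -
  have "(\<Sum>t\<in>{Suc k..<n - 1}. alpha_row k l x y z k t * c t) = y l * c l + (\<Sum>t\<in>after_k. y t * c t)"
    unfolding index_sets(2) using index_sets(3,10) k_pos by (simp add: alpha_row_def)
  then show ?thesis using row_sum[of k c] k_less_l l_less by (simp add: alpha_exp_def)
qed

lemma row_sum_l: "(\<Sum>t<n. c t * A l t) = c (n - 1) + P^2 * c l + P * (\<Sum>t\<in>after_l. z t * c t)"
  using row_sum[of l c] l_less k_pos k_less_l index_sets(1) by (simp add: alpha_row_def alpha_exp_def)

lemma row_sum_unit: "r \<in> unit_rows \<Longrightarrow> (\<Sum>t<n. c t * A r t) = c (n - 1) + P * c r"
  using row_sum[of r c] unfolding unit_rows_def by (simp add: alpha_row_def alpha_exp_def)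

definition in_span :: "(nat \<Rightarrow> int) \<Rightarrow> bool" where
  "in_span w \<longleftrightarrow> (\<exists>c. \<forall>r<n. w r = (\<Sum>t<n. c t * A r t))"

text \<open>Back-substitution in the triangular system \<open>A c = w\<close> (with \<open>w\<^sub>n\<^sub>-\<^sub>1 = 0\<close>): the unit
  rows give \<open>c\<^sub>r = w\<^sub>r / P\<close>, then row \<open>l\<close> gives \<open>P\<^sup>2 c\<^sub>l = resid_l w\<close>, row \<open>k\<close> gives
  \<open>P\<^sup>3 c\<^sub>k = resid_k w\<close> and row \<open>0\<close> gives \<open>P\<^sup>4 c\<^sub>0 = resid_0 w\<close>.\<close>
definition resid_l :: "(nat \<Rightarrow> int) \<Rightarrow> int" where
  "resid_l w = w l - (\<Sum>t\<in>after_l. z t * w t)"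

definition resid_k :: "(nat \<Rightarrow> int) \<Rightarrow> int" where
  "resid_k w = P * (w k - (\<Sum>t\<in>after_k. y t * w t)) - y l * resid_l w"

definition resid_0 :: "(nat \<Rightarrow> int) \<Rightarrow> int" where
  "resid_0 w = P^2 * (w 0 - (\<Sum>t\<in>unit_rows. x t * w t)) - x k * resid_k w - P * x l * resid_l w"

lemma sum_scale_P:
  "(\<And>t. t \<in> D \<Longrightarrow> w t = P * c t) \<Longrightarrow> (\<Sum>t\<in>D. f t * w t) = P * (\<Sum>t\<in>D. f t * c t)"
  unfolding sum_distrib_left by (rule sum.cong) auto

lemma in_span_imp_dvd:
  assumes "in_span w" and "w (n - 1) = 0"
  shows "(\<forall>r\<in>unit_rows. P dvd w r) \<and> P^2 dvd resid_l w \<and> P^3 dvd resid_k w \<and> P^4 dvd resid_0 w"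
proof -
  obtain c where c: "\<And>r. r < n \<Longrightarrow> w r = (\<Sum>t<n. c t * A r t)" using assms(1) unfolding in_span_def by blast
  have c_last: "c (n - 1) = 0" using c[of "n - 1"] row_sum_last assms(2) n_ge_4 by simp
  have unit: "w t = P * c t" if "t \<in> unit_rows" for t
  proof -
    have "t < n" using that unfolding unit_rows_def by auto
    then show ?thesis using c[of t] row_sum_unit[OF that] c_last by simp
  qed
  have sums: "(\<Sum>t\<in>after_l. z t * w t) = P * (\<Sum>t\<in>after_l. z t * c t)"
      "(\<Sum>t\<in>after_k. y t * w t) = P * (\<Sum>t\<in>after_k. y t * c t)"
      "(\<Sum>t\<in>unit_rows. x t * w t) = P * (\<Sum>t\<in>unit_rows. x t * c t)"
    by (rule sum_scale_P[OF unit]; use index_sets(7,8) in blast)+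
  have wl: "w l = P^2 * c l + P * (\<Sum>t\<in>after_l. z t * c t)" using c[of l] row_sum_l c_last l_less by simp
  have wk: "w k = P^2 * c k + P * (y l * c l + (\<Sum>t\<in>after_k. y t * c t))"
    using c[of k] row_sum_k c_last k_less_l l_less by simp
  have w0: "w 0 = P^2 * c 0 + P * (x k * c k + x l * c l + (\<Sum>t\<in>unit_rows. x t * c t))"
    using c[of 0] row_sum_0 c_last n_ge_4 by simp
  have rl: "resid_l w = P^2 * c l" unfolding resid_l_def wl sums by simp
  have rk: "resid_k w = P^3 * c k"
    unfolding resid_k_def rl wk sums by (simp add: algebra_simps power2_eq_square power3_eq_cube)
  have "resid_0 w = P^4 * c 0"
    unfolding resid_0_def rl rk w0 sums by (simp add: algebra_simps power2_eq_square power3_eq_cube power4_eq_xxxx)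
  then show ?thesis using unit rl rk by simp
qed

lemma dvd_imp_in_span:
  assumes "w (n - 1) = 0" and unit: "\<forall>r\<in>unit_rows. P dvd w r"
    and dvd: "P^2 dvd resid_l w" "P^3 dvd resid_k w" "P^4 dvd resid_0 w"
  shows "in_span w"
proof -
  define c where "c t = (if t \<in> unit_rows then w t div P else if t = l then resid_l w div P^2
     else if t = k then resid_k w div P^3 else if t = 0 then resid_0 w div P^4 else 0)" for t
  have c_unit: "w t = P * c t" if "t \<in> unit_rows" for t using that unit unfolding c_def by simp
  have c_last: "c (n - 1) = 0" unfolding c_def unit_rows_def using k_less_l l_less k_pos by auto
  have rl: "resid_l w = P^2 * c l" using dvd index_sets(6) unfolding c_def by simp
  have rk: "resid_k w = P^3 * c k" using dvd index_sets(5) k_less_l unfolding c_def by simp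
  have r0: "resid_0 w = P^4 * c 0" using dvd k_pos k_less_l unfolding c_def unit_rows_def by simp
  have sums: "(\<Sum>t\<in>after_l. z t * w t) = P * (\<Sum>t\<in>after_l. z t * c t)"
      "(\<Sum>t\<in>after_k. y t * w t) = P * (\<Sum>t\<in>after_k. y t * c t)"
      "(\<Sum>t\<in>unit_rows. x t * w t) = P * (\<Sum>t\<in>unit_rows. x t * c t)"
    by (rule sum_scale_P[OF c_unit]; use index_sets(7,8) in blast)+
  have "w l = P^2 * c l + P * (\<Sum>t\<in>after_l. z t * c t)" using rl sums unfolding resid_l_def by simp
  moreover have "P * w k = P * (P^2 * c k + P * (y l * c l + (\<Sum>t\<in>after_k. y t * c t)))"
    using rk rl sums unfolding resid_k_def by (simp add: algebra_simps power2_eq_square power3_eq_cube)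
  moreover have "P^2 * w 0 = P^2 * (P^2 * c 0 + P * (x k * c k + x l * c l + (\<Sum>t\<in>unit_rows. x t * c t)))"
    using r0 rk rl sums unfolding resid_0_def
    by (simp add: algebra_simps power2_eq_square power3_eq_cube power4_eq_xxxx)
  ultimately have rows: "w l = (\<Sum>t<n. c t * A l t)" "w k = (\<Sum>t<n. c t * A k t)" "w 0 = (\<Sum>t<n. c t * A 0 t)"
    using row_sum_l row_sum_k row_sum_0 c_last P_nonzero by simp_all
  have "w r = (\<Sum>t<n. c t * A r t)" if "r < n" for r
  proof -
    have "r = n - 1 \<or> r \<in> unit_rows \<or> r = l \<or> r = k \<or> r = 0"
      using that unfolding unit_rows_def by auto
    then show ?thesis using row_sum_last row_sum_unit c_last c_unit assms(1) rows by auto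
  qed
  then show ?thesis unfolding in_span_def by blast
qed

lemma in_span_iff:
  assumes "w (n - 1) = 0"
  shows "in_span w \<longleftrightarrow>
    (\<forall>r\<in>unit_rows. P dvd w r) \<and> P^2 dvd resid_l w \<and> P^3 dvd resid_k w \<and> P^4 dvd resid_0 w"
  using in_span_imp_dvd dvd_imp_in_span assms by blast

definition row_0 :: "nat \<Rightarrow> int" where "row_0 i = (if i = 0 then P else x i)"
definition row_k :: "nat \<Rightarrow> int" where "row_k i = (if i = k then P else if k < i then y i else 0)"
definition row_l :: "nat \<Rightarrow> int" where "row_l i = (if i = l then P else if l < i then z i else 0)"

lemma A_row_0: "i < n - 1 \<Longrightarrow> A 0 i = P * row_0 i"
  unfolding alpha_mat_def row_0_def alpha_row_def alpha_exp_def by (auto simp: power2_eq_square)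

lemma A_row_k: "i < n - 1 \<Longrightarrow> A k i = P * row_k i"
  using k_less_l l_less k_pos
  unfolding alpha_mat_def row_k_def alpha_row_def alpha_exp_def by (auto simp: power2_eq_square)

lemma A_row_l: "i < n - 1 \<Longrightarrow> A l i = P * row_l i"
  using k_less_l l_less k_pos
  unfolding alpha_mat_def row_l_def alpha_row_def alpha_exp_def by (auto simp: power2_eq_square)

lemma A_unit_row: "r \<in> unit_rows \<Longrightarrow> i < n - 1 \<Longrightarrow> A r i = (if i = r then P else 0)"
  unfolding alpha_mat_def unit_rows_def alpha_row_def alpha_exp_def by auto

lemma A_last_col: "r < n \<Longrightarrow> A r (n - 1) = 1"
  unfolding alpha_mat_def by simp

definition col_prod :: "nat \<Rightarrow> nat \<Rightarrow> nat \<Rightarrow> int" where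
  "col_prod i j = (\<lambda>r. A r i * A r j)"

definition quad_l :: "nat \<Rightarrow> nat \<Rightarrow> int" where
  "quad_l i j = row_l i * row_l j - (if i = j \<and> i \<in> after_l then z i else 0)"

definition quad_k :: "nat \<Rightarrow> nat \<Rightarrow> int" where
  "quad_k i j = row_k i * row_k j - (if i = j \<and> i \<in> after_k then y i else 0)"

definition quad_0 :: "nat \<Rightarrow> nat \<Rightarrow> int" where
  "quad_0 i j = row_0 i * row_0 j - (if i = j \<and> i \<in> unit_rows then x i else 0)"

lemma sum_col_prod:
  assumes D: "D \<subseteq> unit_rows" and "i < n - 1" "j < n - 1"
  shows "(\<Sum>t\<in>D. f t * col_prod i j t) = (if i = j \<and> i \<in> D then f i * (P * P) else 0)"
proof -
  have "finite D" using finite_subset[OF D index_sets(9)] .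
  have "(\<Sum>t\<in>D. f t * col_prod i j t) = (\<Sum>t\<in>D. if t = i then (if i = j then f i * (P * P) else 0) else 0)"
    by (rule sum.cong[OF refl]) (use D assms A_unit_row in \<open>auto simp: col_prod_def\<close>)
  also have "\<dots> = (if i = j \<and> i \<in> D then f i * (P * P) else 0)"
    using \<open>finite D\<close> by (simp add: sum.delta)
  finally show ?thesis .
qed

lemma resid_l_col_prod: "i < n - 1 \<Longrightarrow> j < n - 1 \<Longrightarrow> resid_l (col_prod i j) = P^2 * quad_l i j"
  unfolding resid_l_def quad_l_def using sum_col_prod[OF index_sets(7)] A_row_l
  by (cases "i = j") (simp_all add: col_prod_def algebra_simps power2_eq_square)

lemma resid_k_col_prod:
  "i < n - 1 \<Longrightarrow> j < n - 1 \<Longrightarrow> resid_k (col_prod i j) = P^3 * quad_k i j - P^2 * (y l * quad_l i j)"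
  unfolding resid_k_def quad_k_def using sum_col_prod[OF index_sets(8)] A_row_k resid_l_col_prod
  by (cases "i = j") (simp_all add: col_prod_def algebra_simps power2_eq_square power3_eq_cube)

lemma resid_0_col_prod:
  "i < n - 1 \<Longrightarrow> j < n - 1 \<Longrightarrow>
    resid_0 (col_prod i j) = P^4 * quad_0 i j - x k * resid_k (col_prod i j) - P^3 * (x l * quad_l i j)"
  unfolding resid_0_def quad_0_def using sum_col_prod[of unit_rows] A_row_0 resid_l_col_prod
  by (cases "i = j") (simp_all add: col_prod_def algebra_simps power2_eq_square power3_eq_cube power4_eq_xxxx)

text \<open>The division by \<open>P\<close> is exact whenever the first conjunct holds.\<close>
definition prod_cond :: "nat \<Rightarrow> nat \<Rightarrow> bool" where
  "prod_cond i j \<longleftrightarrow> P dvd y l * quad_l i j \<and> P dvd x k * (quad_k i j - (y l * quad_l i j) div P) + x l * quad_l i j"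

lemma dvd_cancel_power: "(P ^ m * P) dvd (P ^ m * a) \<longleftrightarrow> P dvd a"
  using P_nonzero by simp

lemma col_prod_in_span_iff:
  assumes i: "i < n - 1" and j: "j < n - 1"
  shows "in_span (col_prod i j) \<longleftrightarrow> prod_cond i j"
proof -
  have unit: "\<forall>r\<in>unit_rows. P dvd col_prod i j r"
    using A_unit_row i j unfolding col_prod_def by simp
  have dvd_l: "P^2 dvd resid_l (col_prod i j)" using resid_l_col_prod[OF i j] by simp
  have "resid_k (col_prod i j) = P^2 * (P * quad_k i j - y l * quad_l i j)"
    using resid_k_col_prod[OF i j] by (simp add: algebra_simps power2_eq_square power3_eq_cube)
  then have dvd_k: "P^3 dvd resid_k (col_prod i j) \<longleftrightarrow> P dvd y l * quad_l i j"
    using dvd_cancel_power[of 2 "P * quad_k i j - y l * quad_l i j"]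
    by (simp add: power3_eq_cube power2_eq_square dvd_diff_commute dvd_diff_right_iff)
  have dvd_0: "P^4 dvd resid_0 (col_prod i j) \<longleftrightarrow> P dvd x k * (quad_k i j - (y l * quad_l i j) div P) + x l * quad_l i j"
    if "P dvd y l * quad_l i j"
  proof -
    define q where "q = (y l * quad_l i j) div P"
    have "y l * quad_l i j = P * q" using that unfolding q_def by simp
    then have "resid_0 (col_prod i j) = P^3 * (P * quad_0 i j - (x k * (quad_k i j - q) + x l * quad_l i j))"
      unfolding resid_0_col_prod[OF i j] resid_k_col_prod[OF i j]
      by (simp add: algebra_simps power2_eq_square power3_eq_cube power4_eq_xxxx)
    then show ?thesis
      using dvd_cancel_power[of 3 "P * quad_0 i j - (x k * (quad_k i j - q) + x l * quad_l i j)"]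
      unfolding q_def by (simp add: power4_eq_xxxx power3_eq_cube dvd_diff_right_iff)
  qed
  have last: "col_prod i j (n - 1) = 0"
    using i j unfolding col_prod_def alpha_mat_def by simp
  show ?thesis
    unfolding in_span_iff[where w = "col_prod i j", OF last] prod_cond_def using unit dvd_l dvd_k dvd_0 by blast
qed

lemma in_span_col:
  assumes "m < n"
  shows "in_span (\<lambda>r. A r m)"
proof -
  have "(\<Sum>t<n. (if t = m then 1 else 0) * A r t) = A r m" for r
    using assms by (simp add: if_distrib[of "\<lambda>c. c * _"] sum.delta cong: if_cong)
  then show ?thesis unfolding in_span_def by (intro exI[where x = "\<lambda>t. if t = m then 1 else 0"]) simp
qed

lemma col_prod_last_in_span: "i < n \<Longrightarrow> j < n \<Longrightarrow> i = n - 1 \<or> j = n - 1 \<Longrightarrow> in_span (col_prod i j)"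
  using in_span_col A_last_col unfolding in_span_def col_prod_def by auto

lemma closure_iff_prod_cond:
  "(\<forall>i<n. \<forall>j<n. \<exists>c. \<forall>r<n. A r i * A r j = (\<Sum>t<n. c t * A r t)) \<longleftrightarrow> (\<forall>i<n - 1. \<forall>j<n - 1. prod_cond i j)"
proof -
  have "(\<exists>c. \<forall>r<n. A r i * A r j = (\<Sum>t<n. c t * A r t)) \<longleftrightarrow> (i < n - 1 \<and> j < n - 1 \<longrightarrow> prod_cond i j)"
    if "i < n" "j < n" for i j
  proof (cases "i < n - 1 \<and> j < n - 1")
    case True
    then show ?thesis using col_prod_in_span_iff[of i j] unfolding in_span_def col_prod_def by simp
  next
    case False
    then have "i = n - 1 \<or> j = n - 1" using that by auto
    then show ?thesis using col_prod_last_in_span[OF that] False unfolding in_span_def col_prod_def by auto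
  qed
  then show ?thesis by (auto dest: less_imp_diff_less)
qed

lemma z_after_l: "z \<in> digit_vecs P after_l"
  using z unfolding after_l_def .

lemma z_outside: "i \<notin> after_l \<Longrightarrow> z i = 0"
  using digit_vecs_outside[OF z_after_l] by blast

lemma y_l_range: "0 \<le> y l \<and> y l < P"
  using digit_vecs_range[OF y] k_less_l l_less by auto

lemma x_k_range: "0 \<le> x k \<and> x k < P"
  using digit_vecs_range[OF x] k_less_l l_less k_pos by auto

lemma index_facts:
  "l \<notin> after_l" "l \<notin> after_k" "k \<notin> after_l" "k \<notin> after_k" "after_l \<subseteq> after_k"
  "i \<in> after_k \<longleftrightarrow> k < i \<and> i \<noteq> l \<and> i < n - 1" "i \<in> after_l \<longleftrightarrow> l < i \<and> i < n - 1"
  unfolding after_l_def after_k_def using k_less_l by auto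

lemma row_l_below: "i < l \<Longrightarrow> row_l i = 0" and row_l_above: "l < i \<Longrightarrow> row_l i = z i"
  and row_l_l: "row_l l = P"
  unfolding row_l_def by auto

lemma row_l_after_k: "i \<in> after_k \<Longrightarrow> row_l i = z i"
  using row_l_below row_l_above z_outside index_facts(6,7) by (metis linorder_neqE_nat)

lemma row_k_below: "i < k \<Longrightarrow> row_k i = 0" and row_k_above: "k < i \<Longrightarrow> row_k i = y i"
  and row_k_k: "row_k k = P"
  unfolding row_k_def by auto

lemma prod_cond_sym: "prod_cond i j = prod_cond j i"
proof (cases "i = j")
  case False
  then show ?thesis unfolding prod_cond_def quad_l_def quad_k_def by (simp add: mult.commute)
qed simp

lemma subring_cond_of_prod_cond:
  assumes all: "\<forall>i<n - 1. \<forall>j<n - 1. prod_cond i j"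
  shows "subring_cond P k l after_k after_l x y z"
proof -
  have quad_l_ll: "quad_l l l = P * P" unfolding quad_l_def using index_facts(1) row_l_l by simp
  have quad_k_ll: "quad_k l l = y l * y l" unfolding quad_k_def using index_facts(2) row_k_above k_less_l by simp
  have "(y l * (P * P)) div P = y l * P" using P_nonzero by simp
  moreover have "prod_cond l l" using all l_less by blast
  ultimately have "P dvd x k * (y l * y l - y l * P) + x l * (P * P)"
    unfolding prod_cond_def quad_l_ll quad_k_ll by simp
  then have "P dvd x k * (y l * y l)"
    by (rule dvd_linear_combination[where c = 1 and d = "x k * y l - x l * P", OF _ dvd_refl])
      (simp add: algebra_simps)
  then have xk_yl: "P dvd x k \<or> P dvd y l" using P_dvd_mult_iff by auto
  show ?thesis
  proof (cases "y l = 0")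
    case False
    then have yl: "\<not> P dvd y l" using digit_dvd_eq_0 y_l_range by blast
    then have "x k = 0" using xk_yl digit_dvd_eq_0 x_k_range by blast
    moreover have "z \<in> zero_or_basis after_l"
      unfolding zero_or_basis_iff_idem[OF z_after_l]
    proof (intro ballI)
      fix i j assume ij: "i \<in> after_l" "j \<in> after_l"
      then have "P dvd y l * quad_l i j" using all index_facts(7) unfolding prod_cond_def by blast
      then have "P dvd quad_l i j" using P_dvd_mult_iff yl by blast
      moreover have "quad_l i j = z i * z j - (if i = j then z i else 0)"
        unfolding quad_l_def using ij index_facts(7) row_l_above by auto
      ultimately show "P dvd z i * z j - (if i = j then z i else 0)" by simp
    qed
    ultimately show ?thesis unfolding subring_cond_def using False by simp
  next
    case True
    have "idem_pair P (x k) (x l) after_k y z"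
      unfolding idem_pair_def
    proof (intro ballI)
      fix i j assume ij: "i \<in> after_k" "j \<in> after_k"
      have "quad_l i j = z i * z j - (if i = j then z i else 0)"
        unfolding quad_l_def using ij row_l_after_k z_outside by auto
      moreover have "quad_k i j = y i * y j - (if i = j then y i else 0)"
        unfolding quad_k_def using ij index_facts(6) row_k_above by auto
      moreover have "prod_cond i j" using all ij index_facts(6) by blast
      ultimately show "P dvd x k * (y i * y j - (if i = j then y i else 0)) + x l * (z i * z j - (if i = j then z i else 0))"
        unfolding prod_cond_def using True by simp
    qed
    then show ?thesis unfolding subring_cond_def using True by simp
  qed
qed

lemma prod_cond_before_l:
  assumes cond: "subring_cond P k l after_k after_l x y z" and "i \<le> j" "j < n - 1" "i < l"
  shows "prod_cond i j"
proof -
  have "i \<notin> after_l" using assms(4) index_facts(7) by simp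
  then have ql: "quad_l i j = 0" unfolding quad_l_def using assms(4) row_l_below by simp
  consider "i < k" | "i = k" | "k < i" by linarith
  then show ?thesis
  proof cases
    case 1
    then have "quad_k i j = 0" unfolding quad_k_def using row_k_below index_facts(6) by auto
    then show ?thesis unfolding prod_cond_def ql by simp
  next
    case 2
    then have "quad_k i j = P * row_k j" unfolding quad_k_def using row_k_k index_facts(4) by auto
    then show ?thesis unfolding prod_cond_def ql by simp
  next
    case 3
    have i: "i \<in> after_k" using 3 assms index_facts(6) by auto
    have qk: "quad_k i j = y i * y j - (if i = j then y i else 0)"
      unfolding quad_k_def using 3 assms(2) i row_k_above by auto
    have "P dvd x k * (y i * y j - (if i = j then y i else 0))"
    proof (cases "y l = 0")
      case False then show ?thesis using cond unfolding subring_cond_def by simp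
    next
      case True
      then have idem: "idem_pair P (x k) (x l) after_k y z" using cond unfolding subring_cond_def by simp
      show ?thesis
      proof (cases "j = l")
        case True then show ?thesis using \<open>y l = 0\<close> 3 by simp
      next
        case False
        then have "j \<in> after_k" using 3 assms index_facts(6) by auto
        then show ?thesis using idem i z_outside[OF \<open>i \<notin> after_l\<close>] unfolding idem_pair_def
          by (cases "i = j") force+
      qed
    qed
    then show ?thesis unfolding prod_cond_def ql qk by simp
  qed
qed

lemma prod_cond_from_l:
  assumes cond: "subring_cond P k l after_k after_l x y z" and "i \<le> j" "j < n - 1" "l \<le> i"
  shows "prod_cond i j"
proof (cases "i = l")
  case True
  have ql: "quad_l i j = P * row_l j" unfolding quad_l_def using True row_l_l index_facts(1) by simp
  have "quad_k i j = y l * y j" unfolding quad_k_def using True index_facts(2) row_k_above k_less_l assms(2) by auto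
  moreover have "y l * quad_l i j div P = y l * row_l j" unfolding ql using P_nonzero by (simp add: algebra_simps)
  moreover have "P dvd x k * (y l * y j - y l * row_l j)"
    using cond unfolding subring_cond_def by (cases "y l = 0") auto
  ultimately show ?thesis unfolding prod_cond_def ql by simp
next
  case False
  then have ij: "i \<in> after_l" "j \<in> after_l" using assms index_facts(7) by auto
  then have ijk: "i \<in> after_k" "j \<in> after_k" using index_facts(5) by auto
  have ql: "quad_l i j = z i * z j - (if i = j then z i else 0)"
    unfolding quad_l_def using ij row_l_above index_facts(7) by auto
  have qk: "quad_k i j = y i * y j - (if i = j then y i else 0)"
    unfolding quad_k_def using ijk row_k_above index_facts(6) by auto
  show ?thesis
  proof (cases "y l = 0")
    case False
    then have "x k = 0" "z \<in> zero_or_basis after_l" using cond unfolding subring_cond_def by auto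
    then show ?thesis unfolding prod_cond_def ql using zero_or_basis_idem by simp
  next
    case True
    then have "idem_pair P (x k) (x l) after_k y z" using cond unfolding subring_cond_def by simp
    then show ?thesis unfolding prod_cond_def ql qk idem_pair_def using True ijk by simp
  qed
qed

lemma all_prod_cond_iff: "(\<forall>i<n - 1. \<forall>j<n - 1. prod_cond i j) \<longleftrightarrow> subring_cond P k l after_k after_l x y z"
proof
  assume cond: "subring_cond P k l after_k after_l x y z"
  have "prod_cond i j" if "i \<le> j" "j < n - 1" for i j
    using prod_cond_before_l[OF cond that] prod_cond_from_l[OF cond that] by linarith
  then show "\<forall>i<n - 1. \<forall>j<n - 1. prod_cond i j"
    using prod_cond_sym by (metis nat_le_linear)
qed (rule subring_cond_of_prod_cond)

end

section \<open>Counting the subring matrices\<close>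

lemma length_alpha_comp: "length (alpha_comp n k l) = n - 1"
  unfolding alpha_comp_def by simp

lemma nth_alpha_comp: "r < n - 1 \<Longrightarrow> alpha_comp n k l ! r = alpha_exp k l r"
  unfolding alpha_comp_def alpha_exp_def by simp

definition alpha_shape :: "int \<Rightarrow> nat \<Rightarrow> nat \<Rightarrow> nat \<Rightarrow> (nat \<Rightarrow> nat \<Rightarrow> int) \<Rightarrow> bool" where
  "alpha_shape P n k l B \<longleftrightarrow>
     (\<forall>r s. (n \<le> r \<or> n \<le> s) \<longrightarrow> B r s = 0) \<and> (\<forall>r<n. \<forall>s<r. B r s = 0)
     \<and> (\<forall>r<n - 1. B r r = P ^ alpha_exp k l r) \<and> B (n - 1) (n - 1) = 1 \<and> (\<forall>r<n. B r (n - 1) = 1)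
     \<and> (\<forall>r s. r < s \<and> s < n - 1 \<longrightarrow> (\<exists>a. B r s = P * a) \<and> 0 \<le> B r s \<and> B r s < P ^ alpha_exp k l r)"

definition col_closed :: "nat \<Rightarrow> (nat \<Rightarrow> nat \<Rightarrow> int) \<Rightarrow> bool" where
  "col_closed n B \<longleftrightarrow> (\<forall>i<n. \<forall>j<n. \<exists>c. \<forall>r<n. B r i * B r j = (\<Sum>t<n. c t * B r t))"

lemma irreducible_subring_matrices_alpha_comp:
  assumes "1 \<le> n"
  shows "irreducible_subring_matrices p (alpha_comp n k l) = {B. alpha_shape (int p) n k l B \<and> col_closed n B}"
proof -
  have "length (alpha_comp n k l) + 1 = n" using length_alpha_comp assms by simp
  then show ?thesis
    unfolding irreducible_subring_matrices_def Let_def alpha_shape_def col_closed_def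
    by (simp add: nth_alpha_comp cong: conj_cong)
qed

definition alpha_params :: "int \<Rightarrow> nat \<Rightarrow> nat \<Rightarrow> nat \<Rightarrow> ((nat \<Rightarrow> int) \<times> (nat \<Rightarrow> int) \<times> (nat \<Rightarrow> int)) set" where
  "alpha_params P n k l = {(x, y, z). x \<in> digit_vecs P {1..<n - 1} \<and> y \<in> digit_vecs P {Suc k..<n - 1}
     \<and> z \<in> digit_vecs P {Suc l..<n - 1} \<and> subring_cond P k l ({Suc k..<n - 1} - {l}) {Suc l..<n - 1} x y z}"

context alpha_matrix
begin

lemma alpha_shape_A: "alpha_shape P n k l A"
proof -
  have entry: "0 \<le> alpha_row k l x y z r s \<and> alpha_row k l x y z r s < P" if "r < s" "s < n - 1" for r s
    using digit_vecs_range[OF x, of s] digit_vecs_range[OF y, of s] digit_vecs_range[OF z, of s] that P_ge_2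
    unfolding alpha_row_def by auto
  have upper: "(\<exists>a. A r s = P * a) \<and> 0 \<le> A r s \<and> A r s < P ^ alpha_exp k l r"
    if "r < s" "s < n - 1" for r s
  proof -
    have "r < n" "s < n" "s \<noteq> n - 1" using that by auto
    then have A_rs: "A r s = P * alpha_row k l x y z r s" using that by (simp add: alpha_mat_def)
    have "A r s < P ^ alpha_exp k l r"
    proof (cases "r = 0 \<or> r = k \<or> r = l")
      case True
      then show ?thesis using entry[OF that] A_rs P_ge_2 by (simp add: alpha_exp_def power2_eq_square)
    next
      case False
      then show ?thesis using A_rs P_ge_2 by (simp add: alpha_exp_def alpha_row_def)
    qed
    then show ?thesis using A_rs entry[OF that] P_ge_2 by simp
  qed
  show ?thesis
    unfolding alpha_shape_def
  proof (intro conjI allI impI)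
    show "A (n - 1) (n - 1) = 1" using n_ge_4 by (simp add: alpha_mat_def)
  qed (use upper in \<open>auto simp: alpha_mat_def\<close>)
qed

lemma col_closed_iff: "col_closed n A \<longleftrightarrow> subring_cond P k l after_k after_l x y z"
  unfolding col_closed_def closure_iff_prod_cond all_prod_cond_iff ..

end

context prime_modulus
begin

definition row_digits :: "(nat \<Rightarrow> nat \<Rightarrow> int) \<Rightarrow> nat \<Rightarrow> nat set \<Rightarrow> nat \<Rightarrow> int" where
  "row_digits B r D = (\<lambda>s. if s \<in> D then B r s div P else 0)"

lemma alpha_shape_row_digits:
  assumes B: "alpha_shape P n k l B" and "r < s" "s < n - 1" "r = 0 \<or> r = k \<or> r = l"
  shows "B r s = P * (B r s div P) \<and> 0 \<le> B r s div P \<and> B r s div P < P"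
proof -
  have "(\<exists>a. B r s = P * a) \<and> 0 \<le> B r s \<and> B r s < P ^ alpha_exp k l r"
    using B assms(2,3) unfolding alpha_shape_def by blast
  moreover have "alpha_exp k l r = 2" using assms(4) unfolding alpha_exp_def by auto
  ultimately obtain a where a: "B r s = P * a" "0 \<le> B r s" "B r s < P ^ 2" by auto
  then have "a = B r s div P" "0 \<le> a" "a < P"
    using P_ge_2 by (auto simp: zero_le_mult_iff power2_eq_square)
  then show ?thesis using a(1) by simp
qed

lemma alpha_shape_digit_vecs:
  assumes "alpha_shape P n k l B" "r = 0 \<or> r = k \<or> r = l"
  shows "row_digits B r {Suc r..<n - 1} \<in> digit_vecs P {Suc r..<n - 1}"
  using alpha_shape_row_digits[OF assms(1) _ _ assms(2)] unfolding digit_vecs_def row_digits_def by auto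

lemma alpha_shape_eq_alpha_mat:
  assumes B: "alpha_shape P n k l B" and "1 \<le> k" "k < l"
  shows "B = alpha_mat P n k l (row_digits B 0 {1..<n - 1}) (row_digits B k {Suc k..<n - 1})
    (row_digits B l {Suc l..<n - 1})"
    (is "B = alpha_mat P n k l ?x ?y ?z")
proof (intro ext)
  fix r s
  have upper: "B r s = P * alpha_row k l ?x ?y ?z r s" if "r < s" "s < n - 1"
  proof (cases "r = 0 \<or> r = k \<or> r = l")
    case True
    then show ?thesis
      using alpha_shape_row_digits[OF B that True] that assms(2,3)
      unfolding alpha_row_def row_digits_def by auto
  next
    case False
    have "(\<exists>a. B r s = P * a) \<and> 0 \<le> B r s \<and> B r s < P ^ alpha_exp k l r"
      using B that unfolding alpha_shape_def by blast
    moreover have "alpha_exp k l r = 1" using False unfolding alpha_exp_def by auto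
    ultimately have "(\<exists>a. B r s = P * a) \<and> 0 \<le> B r s \<and> B r s < P" by simp
    then show ?thesis using False digit_dvd_eq_0[of "B r s"] unfolding alpha_row_def by auto
  qed
  show "B r s = alpha_mat P n k l ?x ?y ?z r s"
  proof (cases "r < n \<and> s < n \<and> s \<noteq> n - 1")
    case True
    then have "s < n - 1" by auto
    then show ?thesis using B upper True unfolding alpha_shape_def alpha_mat_def
      by (cases r s rule: linorder_cases) auto
  next
    case False
    then show ?thesis using B unfolding alpha_shape_def alpha_mat_def by auto
  qed
qed

end

lemma irreducible_subring_matrices_alpha_params:
  assumes "4 \<le> n" "1 \<le> k" "k < l" "l < n - 1" "prime p"
  shows "irreducible_subring_matrices p (alpha_comp n k l)
    = (\<lambda>(x, y, z). alpha_mat (int p) n k l x y z) ` alpha_params (int p) n k l"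
proof -
  interpret prime_modulus "int p" using assms(5) by unfold_locales simp
  have params: "alpha_matrix (int p) n k l x y z \<longleftrightarrow>
      x \<in> digit_vecs (int p) {1..<n - 1} \<and> y \<in> digit_vecs (int p) {Suc k..<n - 1} \<and> z \<in> digit_vecs (int p) {Suc l..<n - 1}"
    for x y z
    using assms unfolding alpha_matrix_def alpha_matrix_axioms_def by (simp add: prime_modulus_axioms)
  show ?thesis
  proof (rule set_eqI, rule iffI)
    fix B assume "B \<in> irreducible_subring_matrices p (alpha_comp n k l)"
    then have shape: "alpha_shape (int p) n k l B" and closed: "col_closed n B"
      using irreducible_subring_matrices_alpha_comp assms(1) by auto
    let ?x = "row_digits B 0 {1..<n - 1}" and ?y = "row_digits B k {Suc k..<n - 1}"
      and ?z = "row_digits B l {Suc l..<n - 1}"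
    interpret alpha_matrix "int p" n k l ?x ?y ?z
      using params alpha_shape_digit_vecs[OF shape] by simp
    have "B = A" using alpha_shape_eq_alpha_mat[OF shape assms(2,3)] .
    then have "(?x, ?y, ?z) \<in> alpha_params (int p) n k l"
      using closed col_closed_iff x y z unfolding alpha_params_def after_k_def after_l_def by simp
    then show "B \<in> (\<lambda>(x, y, z). alpha_mat (int p) n k l x y z) ` alpha_params (int p) n k l"
      using \<open>B = A\<close> by force
  next
    fix B assume "B \<in> (\<lambda>(x, y, z). alpha_mat (int p) n k l x y z) ` alpha_params (int p) n k l"
    then obtain x y z where B: "B = alpha_mat (int p) n k l x y z" and xyz: "(x, y, z) \<in> alpha_params (int p) n k l"
      by auto
    interpret alpha_matrix "int p" n k l x y z
      using params xyz unfolding alpha_params_def by simp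
    show "B \<in> irreducible_subring_matrices p (alpha_comp n k l)"
      using irreducible_subring_matrices_alpha_comp assms(1) alpha_shape_A col_closed_iff xyz B
      unfolding alpha_params_def after_k_def after_l_def by simp
  qed
qed

context alpha_matrix
begin

lemma row_digits_A:
  "row_digits A 0 {1..<n - 1} = x" "row_digits A k {Suc k..<n - 1} = y" "row_digits A l {Suc l..<n - 1} = z"
proof -
  have "row_digits A r {Suc r..<n - 1} = alpha_row k l x y z r" if "r = 0 \<or> r = k \<or> r = l" for r
  proof
    fix s
    show "row_digits A r {Suc r..<n - 1} s = alpha_row k l x y z r s"
    proof (cases "s \<in> {Suc r..<n - 1}")
      case True
      then have "A r s = P * alpha_row k l x y z r s" by (auto simp: alpha_mat_def)
      then show ?thesis using True P_nonzero unfolding row_digits_def by simp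
    next
      case False
      then show ?thesis
        using that digit_vecs_outside[OF x] digit_vecs_outside[OF y] digit_vecs_outside[OF z] k_pos
        unfolding row_digits_def alpha_row_def by auto
    qed
  qed
  then show "row_digits A 0 {1..<n - 1} = x" "row_digits A k {Suc k..<n - 1} = y" "row_digits A l {Suc l..<n - 1} = z"
    using k_pos k_less_l unfolding alpha_row_def by (auto simp: fun_eq_iff)
qed

end

context prime_modulus
begin

lemma inj_on_alpha_mat:
  assumes "4 \<le> n" "1 \<le> k" "k < l" "l < n - 1"
  shows "inj_on (\<lambda>(x, y, z). alpha_mat P n k l x y z) (alpha_params P n k l)"
proof (rule inj_onI)
  fix u u' assume u: "u \<in> alpha_params P n k l" "u' \<in> alpha_params P n k l"
    and eq_u: "(\<lambda>(x, y, z). alpha_mat P n k l x y z) u = (\<lambda>(x, y, z). alpha_mat P n k l x y z) u'"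
  obtain x y z x' y' z' where uu: "u = (x, y, z)" "u' = (x', y', z')" by (metis prod.collapse)
  have eq: "alpha_mat P n k l x y z = alpha_mat P n k l x' y' z'" using eq_u uu by simp
  have "alpha_matrix P n k l x y z" "alpha_matrix P n k l x' y' z'"
    using assms u uu unfolding alpha_matrix_def alpha_matrix_axioms_def alpha_params_def
    by (auto simp: prime_modulus_axioms)
  from alpha_matrix.row_digits_A[OF this(1), unfolded eq] alpha_matrix.row_digits_A[OF this(2)]
  show "u = u'" using uu by simp
qed

lemma card_alpha_params:
  assumes "4 \<le> n" "1 \<le> k" "k < l" "l < n - 1"
  defines "s \<equiv> n - k - 3" and "u \<equiv> n - l - 2"
  shows "int (card (alpha_params P n k l)) = P ^ (n - 4) * (P * (P - 1) * P ^ s * (int u + 1)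
    + P ^ s * P ^ u + (P - 1) * (int s + 1) * P ^ u + (P - 1) * P ^ s * (int u + 1)
    + (P - 1)^2 * (int s + 1) * (int u + 1)
    + (P - 1) * (P ^ u - (int u + 1) + (int u + int (u choose 2)) * (P - 2) * (P - 3)))"
proof -
  let ?D = "{1..<n - 1}" and ?S = "{Suc k..<n - 1} - {l}" and ?U = "{Suc l..<n - 1}"
  have ins: "insert l ?S = {Suc k..<n - 1}" and US: "?U \<subseteq> ?S" using assms by auto
  have "k \<in> ?D" "l \<in> ?D" "k \<noteq> l" "l \<notin> ?S" using assms by auto
  from card_subring_params[OF this US, unfolded ins]
  have "card (alpha_params P n k l) = card (digit_vecs P (?D - {k, l})) * card (core_params ?S ?U)"
    unfolding alpha_params_def .
  moreover have "card (?D - {k, l}) = n - 4" using assms by (subst card_Diff_subset) auto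
  moreover have "card ?S = s" "card ?U = u" using assms by (auto simp: card_Diff_singleton)
  ultimately show ?thesis
    using card_core_params[OF _ US] sum_card_solutions[OF _ US] card_digit_vecs[of "?D - {k, l}" P] P_ge_2
    by simp
qed

end

lemma alpha_count_closed_form:
  fixes P :: int and n k l :: nat
  assumes "4 \<le> n" "1 \<le> k" "k < l" "l < n - 1"
  defines "m \<equiv> n - 4" and "s \<equiv> n - k - 3" and "u \<equiv> n - l - 2"
  shows "P ^ m * (P * (P - 1) * P ^ s * (int u + 1)
    + P ^ s * P ^ u + (P - 1) * (int s + 1) * P ^ u + (P - 1) * P ^ s * (int u + 1)
    + (P - 1)^2 * (int s + 1) * (int u + 1)
    + (P - 1) * (P ^ u - (int u + 1) + (int u + int (u choose 2)) * (P - 2) * (P - 3)))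
  = P ^ (3*n - k - l - 9)
    + int (n - l - 1) * (P - 1) * (P + 1) * P ^ (2*n - k - 7)
    + int (n - k - 1) * (P - 1) * P ^ (2*n - l - 6)
    - int (n - l - 1) * P ^ (n - 4) * (P - 1)
    + int (n - k - 2) * int (n - l - 1) * (P - 1)^2 * P ^ (n - 4)
    + (int (n - l - 2) + int ((n - l - 2) choose 2)) * (P - 1) * (P - 2) * (P - 3) * P ^ (n - 4)"
proof -
  have "3*n - k - l - 9 = m + s + u" "2*n - k - 7 = m + s" "2*n - l - 6 = m + u"
    "n - l - 1 = u + 1" "n - k - 1 = s + 2" "n - k - 2 = s + 1" "n - 4 = m" "n - l - 2 = u"
    unfolding m_def s_def u_def using assms by auto
  then show ?thesis by (simp add: power_add algebra_simps power2_eq_square)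
qed

theorem lemma4p8:
  fixes n k l p :: nat
  assumes "n \<ge> 4" and "1 \<le> k" and "k < l" and "l \<le> n - 2" and "prime p"
  shows "int (g_count (alpha_comp n k l) p) =
      int p ^ (3*n - k - l - 9)
    + int (n - l - 1) * (int p - 1) * (int p + 1) * int p ^ (2*n - k - 7)
    + int (n - k - 1) * (int p - 1) * int p ^ (2*n - l - 6)
    - int (n - l - 1) * int p ^ (n - 4) * (int p - 1)
    + int (n - k - 2) * int (n - l - 1) * (int p - 1)^2 * int p ^ (n - 4)
    + (int (n - l - 2) + int ((n - l - 2) choose 2)) * (int p - 1) * (int p - 2) * (int p - 3) * int p ^ (n - 4)"
proof -
  interpret prime_modulus "int p" using \<open>prime p\<close> by unfold_locales simp
  have params: "4 \<le> n" "1 \<le> k" "k < l" "l < n - 1" using assms by auto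
  have "g_count (alpha_comp n k l) p = card (alpha_params (int p) n k l)"
    unfolding g_count_def irreducible_subring_matrices_alpha_params[OF params \<open>prime p\<close>]
    by (rule card_image[OF inj_on_alpha_mat[OF params]])
  then show ?thesis
    using card_alpha_params[OF params] alpha_count_closed_form[OF params, of "int p"] by simp
qed

end
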